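(* Let $\mathbf{W}$ and $X_W$ be as in the context. Let $I_1,I_2,\mathcal I_1,\mathcal I_2\subset\mathbb{S}^1$ be pairwise disjoint open arcs, and let $D_i,\mathcal{D}_i\subset\mathbf{W}$ ($i=1,2$) be compact subsets with $D_i\subset[-2,2]\times I_i\times[1,3]$ and $\mathcal{D}_i\subset[-2,2]\times\mathcal{I}_i\times[1,3]$. Then there is a smooth family $X_W^t$, $t\in[0,2]$, of nowhere-vanishing vector fields on $\mathbf{W}$, each equal to $\partial_z$ near $\partial\mathbf{W}$, with $X_W^0=X_W$ and $X_W^2=\partial_z$, such that: $X_W^t=\partial_z$ on $D_1\cup D_2$ for all $t\in[1,2]$; $X_W^t=X_W$ on $\mathcal D_1\cup\mathcal D_2$ for all $t\in[0,1]$; and for every $t\in(0,2]$ the vector field $X_W^t$ has no closed orbits and no trapped orbits (every trajectory enters and exits $\mathbf{W}$).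
   Context: $\mathbf{W}=[-2,2]\times\mathbb{S}^1\times[1,3]$ with coordinates $(z,\theta,r)$. $X_W=f(z,r)\partial_\theta+g(z,r)\partial_z$, where $f,g$ are smooth functions satisfying: $f$ is odd and $g$ is even in $z$; $f=0$ and $g=1$ near $\partial\mathbf{W}$; $g\ge0$ and $g=0$ exactly on $\{|z|=1,\ r=2\}$; $f\ge0$ for $z>0$ and $f=1$ on $\{1/4\le z\le7/4,\ 5/4\le r\le 11/4\}$. A trajectory meeting $\{z=-2\}$ enters, one meeting $\{z=2\}$ exits; a trapped orbit is one that stays in $\mathbf{W}$ for all positive (or all negative) time. *)

theory Defs
  imports "HOL-Analysis.Analysis"
begin

fun Ck_on :: "nat \<Rightarrow> 'a::euclidean_space set \<Rightarrow> ('a \<Rightarrow> 'b::real_normed_vector) \<Rightarrow> bool" where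
  "Ck_on 0 U F = continuous_on U F"
| "Ck_on (Suc k) U F =
     (F differentiable_on U \<and> continuous_on U F \<and>
      (\<forall>b\<in>Basis. Ck_on k U (\<lambda>x. frechet_derivative F (at x) b)))"

definition smooth_open :: "'a::euclidean_space set \<Rightarrow> ('a \<Rightarrow> 'b::real_normed_vector) \<Rightarrow> bool" where
  "smooth_open U F \<longleftrightarrow> open U \<and> (\<forall>k. Ck_on k U F)"

definition smooth_on_set :: "'a::euclidean_space set \<Rightarrow> ('a \<Rightarrow> 'b::real_normed_vector) \<Rightarrow> bool" where
  "smooth_on_set S F \<longleftrightarrow> (\<exists>U G. S \<subseteq> U \<and> smooth_open U G \<and> (\<forall>x\<in>S. G x = F x))"

text \<open>The circle S^1 is the unit circle in the complex plane, with angle coordinate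
  theta via cis theta. An open arc is the image of an open interval of angles of length at most 2 pi.\<close>
definition open_arc :: "complex set \<Rightarrow> bool" where
  "open_arc I \<longleftrightarrow> (\<exists>a b. a < b \<and> b \<le> a + 2 * pi \<and> I = cis ` {a<..<b})"

text \<open>Covering map from lifted coordinates (z, theta, r) to W.\<close>
definition Phi :: "real \<times> real \<times> real \<Rightarrow> real \<times> complex \<times> real" where
  "Phi p = (case p of (z, \<theta>, r) \<Rightarrow> (z, cis \<theta>, r))"

definition Wlift :: "(real \<times> real \<times> real) set" where
  "Wlift = {-2..2} \<times> UNIV \<times> {1..3}"

definition near_bdry :: "real \<Rightarrow> real \<times> real \<times> real \<Rightarrow> bool" where
  "near_bdry e p = (case p of (z, \<theta>, r) \<Rightarrow> \<bar>z\<bar> \<ge> 2 - e \<or> r \<le> 1 + e \<or> r \<ge> 3 - e)"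

text \<open>A vector field on W given in lifted coordinates: X (z,theta,r) = (dz, dtheta, dr),
  2 pi-periodic in theta. A trajectory (integral curve) on a set of times T, staying in W.\<close>
definition is_traj :: "(real \<times> real \<times> real \<Rightarrow> real \<times> real \<times> real) \<Rightarrow> real set \<Rightarrow> (real \<Rightarrow> real \<times> real \<times> real) \<Rightarrow> bool" where
  "is_traj X T \<gamma> \<longleftrightarrow> (\<forall>s\<in>T. \<gamma> s \<in> Wlift \<and> (\<gamma> has_vector_derivative X (\<gamma> s)) (at s within T))"

definition has_closed_orbit :: "(real \<times> real \<times> real \<Rightarrow> real \<times> real \<times> real) \<Rightarrow> bool" where
  "has_closed_orbit X \<longleftrightarrow> (\<exists>\<gamma> T. is_traj X UNIV \<gamma> \<and> T > 0 \<and> (\<forall>s. Phi (\<gamma> (s + T)) = Phi (\<gamma> s)))"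

definition has_trapped_orbit :: "(real \<times> real \<times> real \<Rightarrow> real \<times> real \<times> real) \<Rightarrow> bool" where
  "has_trapped_orbit X \<longleftrightarrow> (\<exists>\<gamma>. is_traj X {0..} \<gamma> \<or> is_traj X {..0} \<gamma>)"

end

theory Submission
  imports Defs
begin

text \<open>The deformation is \<open>X\<^sup>t = (1 - s\<^sub>t(\<theta>)) X\<^sub>W + s\<^sub>t(\<theta>) \<partial>\<^sub>z\<close> with
  \<open>s\<^sub>t(\<theta>) = \<alpha>(t) \<mu>(\<theta>) + \<beta>(t) (1 - \<mu>(\<theta>))\<close>, where \<open>\<mu>\<close> is a smooth angular bump equal to \<open>1\<close> over
  \<open>D\<^sub>1 \<union> D\<^sub>2\<close> and to \<open>0\<close> outside \<open>I\<^sub>1 \<union> I\<^sub>2\<close>, \<open>\<alpha>\<close> switches on during \<open>[0, 1]\<close> and \<open>\<beta>\<close> during \<open>[1, 2]\<close>.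
  As \<open>0 \<le> s\<^sub>t \<le> 1\<close>, \<open>g \<ge> 0\<close> and \<open>f \<noteq> 0\<close> at the zeros of \<open>g\<close>, no field vanishes.
  For \<open>t > 0\<close> the weight is positive on an arc around some angle \<open>c\<close>, and the function
  \<open>z (1 + \<epsilon> \<psi>(\<theta>))\<close> with \<open>\<psi>(\<theta>) = - sin (\<theta> - c) / (1 - k cos (\<theta> - c))\<close> increases at a uniform
  rate along every trajectory: on the arc through the \<open>\<partial>\<^sub>z\<close>-component, elsewhere because \<open>\<psi>\<close>
  increases there and the rotation \<open>(1 - s\<^sub>t) f\<close> has the sign of \<open>z\<close>. Being bounded on \<open>W\<close>, it
  forbids orbits that stay in \<open>W\<close> for all positive or all negative time, closed orbits included.\<close>

section \<open>Smooth functions on open sets\<close>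

lemma ck_on_imp_continuous_on: "Ck_on k U F \<Longrightarrow> continuous_on U F"
  by (cases k) (simp_all only: Ck_on.simps)

lemma ck_on_Suc_has_derivative:
  assumes "open U" "Ck_on (Suc k) U F" "x \<in> U"
  shows "(F has_derivative frechet_derivative F (at x)) (at x)"
proof -
  have "F differentiable_on U" using assms(2) by (simp only: Ck_on.simps)
  then have "F differentiable (at x within U)" using assms(3) by (simp only: differentiable_on_def)
  then have "F differentiable (at x)" using assms(1,3) by (metis at_within_open)
  then show ?thesis by (simp only: frechet_derivative_works)
qed

lemma ck_on_cong:
  assumes "Ck_on k U F" "open U" "\<And>x. x \<in> U \<Longrightarrow> F x = G x"
  shows "Ck_on k U G"
  using assms
proof (induction k arbitrary: F G)
  case 0
  have "continuous_on U F" using 0(1) by (simp only: Ck_on.simps)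
  then have "continuous_on U G" using continuous_on_cong[of U U F G] 0(3) by blast
  then show ?case by (simp only: Ck_on.simps)
next
  case (Suc k)
  have G_deriv: "(G has_derivative frechet_derivative F (at x)) (at x)" if "x \<in> U" for x
    using has_derivative_transform_within_open[OF ck_on_Suc_has_derivative[OF Suc.prems(2,1) that] Suc.prems(2) that Suc.prems(3)] .
  have same_deriv: "frechet_derivative G (at x) = frechet_derivative F (at x)" if "x \<in> U" for x
    using G_deriv[OF that] frechet_derivative_at by metis
  have G_diff: "G differentiable_on U"
    using G_deriv Suc.prems(2) by (meson differentiable_at_imp_differentiable_on differentiable_def)
  have G_cont: "continuous_on U G" using G_diff differentiable_imp_continuous_on by blast
  have G_derivs: "\<forall>b\<in>Basis. Ck_on k U (\<lambda>x. frechet_derivative G (at x) b)"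
  proof
    fix b :: 'a assume b: "b \<in> Basis"
    have "Ck_on k U (\<lambda>x. frechet_derivative F (at x) b)" using Suc.prems(1) b by (simp only: Ck_on.simps)
    then show "Ck_on k U (\<lambda>x. frechet_derivative G (at x) b)"
      using Suc.IH[of "\<lambda>x. frechet_derivative F (at x) b" "\<lambda>x. frechet_derivative G (at x) b"] Suc.prems(2) same_deriv by simp
  qed
  show ?case using G_diff G_cont G_derivs by (simp only: Ck_on.simps)
qed

lemma ck_on_Suc_imp: "Ck_on (Suc k) U F \<Longrightarrow> Ck_on k U F"
proof (induction k arbitrary: F)
  case 0 then show ?case by (simp only: Ck_on.simps)
next
  case (Suc k)
  have "F differentiable_on U" "continuous_on U F" "\<forall>b\<in>Basis. Ck_on (Suc k) U (\<lambda>x. frechet_derivative F (at x) b)"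
    using Suc.prems Ck_on.simps(2)[of "Suc k" U F] by blast+
  then show ?case using Suc.IH Ck_on.simps(2)[of k U F] by blast
qed

lemma ck_on_SucI:
  assumes "open U" "\<And>x. x \<in> U \<Longrightarrow> (F has_derivative F' x) (at x)"
    "\<And>b. b \<in> Basis \<Longrightarrow> Ck_on k U (\<lambda>x. F' x b)"
  shows "Ck_on (Suc k) U F"
proof -
  have F_deriv: "frechet_derivative F (at x) = F' x" if "x \<in> U" for x
    using assms(2)[OF that] frechet_derivative_at by metis
  have F_diff: "F differentiable_on U"
    using assms(2) by (meson differentiable_at_imp_differentiable_on differentiable_def)
  have F_cont: "continuous_on U F" using F_diff differentiable_imp_continuous_on by blast
  have F_derivs: "\<forall>b\<in>Basis. Ck_on k U (\<lambda>x. frechet_derivative F (at x) b)"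
  proof
    fix b :: 'a assume b: "b \<in> Basis"
    show "Ck_on k U (\<lambda>x. frechet_derivative F (at x) b)"
      by (rule ck_on_cong[OF assms(3)[OF b] assms(1)]) (simp add: F_deriv)
  qed
  show ?thesis using F_diff F_cont F_derivs by (simp only: Ck_on.simps)
qed

lemma ck_on_frechet_derivative:
  assumes "Ck_on (Suc k) U F" "b \<in> Basis"
  shows "Ck_on k U (\<lambda>x. frechet_derivative F (at x) b)"
  using assms Ck_on.simps(2)[of k U F] by blast

lemma ck_on_const: "open U \<Longrightarrow> Ck_on k U (\<lambda>x. c)"
proof (induction k arbitrary: c)
  case 0 then show ?case by (simp only: Ck_on.simps continuous_on_const)
next
  case (Suc k)
  show ?case
    by (rule ck_on_SucI[where F'="\<lambda>x h. 0"]) (auto intro: Suc)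
qed

lemma ck_on_bounded_linear: "open U \<Longrightarrow> bounded_linear L \<Longrightarrow> Ck_on k U L"
proof (induction k)
  case 0 then show ?case by (simp only: Ck_on.simps linear_continuous_on)
next
  case (Suc k)
  show ?case
    by (rule ck_on_SucI[where F'="\<lambda>x h. L h"]) (auto intro: ck_on_const Suc bounded_linear_imp_has_derivative)
qed

lemma ck_on_add: "open U \<Longrightarrow> Ck_on k U F \<Longrightarrow> Ck_on k U G \<Longrightarrow> Ck_on k U (\<lambda>x. F x + G x)"
proof (induction k arbitrary: F G)
  case 0 then show ?case by (simp only: Ck_on.simps continuous_on_add)
next
  case (Suc k)
  show ?case
  proof (rule ck_on_SucI[where F'="\<lambda>x h. frechet_derivative F (at x) h + frechet_derivative G (at x) h"])
    show "open U" by fact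
    fix x assume "x \<in> U"
    show "((\<lambda>x. F x + G x) has_derivative (\<lambda>h. frechet_derivative F (at x) h + frechet_derivative G (at x) h)) (at x)"
      by (rule has_derivative_add[OF ck_on_Suc_has_derivative[OF Suc.prems(1,2) \<open>x\<in>U\<close>] ck_on_Suc_has_derivative[OF Suc.prems(1,3) \<open>x\<in>U\<close>]])
  next
    fix b :: 'a assume b: "b \<in> Basis"
    show "Ck_on k U (\<lambda>x. frechet_derivative F (at x) b + frechet_derivative G (at x) b)"
      by (rule Suc.IH[OF Suc.prems(1) ck_on_frechet_derivative[OF Suc.prems(2) b] ck_on_frechet_derivative[OF Suc.prems(3) b]])
  qed
qed

lemma ck_on_scaleR: "open U \<Longrightarrow> Ck_on k U F \<Longrightarrow> Ck_on k U G \<Longrightarrow> Ck_on k U (\<lambda>x. F x *\<^sub>R G x)"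
proof (induction k arbitrary: F G)
  case 0 then show ?case by (simp only: Ck_on.simps continuous_on_scaleR)
next
  case (Suc k)
  show ?case
  proof (rule ck_on_SucI[where F'="\<lambda>x h. F x *\<^sub>R frechet_derivative G (at x) h + frechet_derivative F (at x) h *\<^sub>R G x"])
    show "open U" by fact
    fix x assume "x \<in> U"
    show "((\<lambda>x. F x *\<^sub>R G x) has_derivative (\<lambda>h. F x *\<^sub>R frechet_derivative G (at x) h + frechet_derivative F (at x) h *\<^sub>R G x)) (at x)"
      by (rule has_derivative_scaleR[OF ck_on_Suc_has_derivative[OF Suc.prems(1,2) \<open>x\<in>U\<close>] ck_on_Suc_has_derivative[OF Suc.prems(1,3) \<open>x\<in>U\<close>]])
  next
    fix b :: 'a assume b: "b \<in> Basis"
    show "Ck_on k U (\<lambda>x. F x *\<^sub>R frechet_derivative G (at x) b + frechet_derivative F (at x) b *\<^sub>R G x)"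
      by (rule ck_on_add[OF Suc.prems(1) Suc.IH[OF Suc.prems(1) ck_on_Suc_imp[OF Suc.prems(2)] ck_on_frechet_derivative[OF Suc.prems(3) b]]
           Suc.IH[OF Suc.prems(1) ck_on_frechet_derivative[OF Suc.prems(2) b] ck_on_Suc_imp[OF Suc.prems(3)]]])
  qed
qed

lemma ck_on_bounded_linear_comp: "open U \<Longrightarrow> bounded_linear L \<Longrightarrow> Ck_on k U F \<Longrightarrow> Ck_on k U (\<lambda>x. L (F x))"
proof (induction k arbitrary: F)
  case 0 then show ?case
    using continuous_on_compose[of U F L] linear_continuous_on[OF 0(2)]
    by (simp only: Ck_on.simps o_def continuous_on_subset[OF _ subset_UNIV])
next
  case (Suc k)
  show ?case
  proof (rule ck_on_SucI[where F'="\<lambda>x h. L (frechet_derivative F (at x) h)"])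
    show "open U" by fact
    fix x assume "x \<in> U"
    show "((\<lambda>x. L (F x)) has_derivative (\<lambda>h. L (frechet_derivative F (at x) h))) (at x)"
      using bounded_linear.has_derivative[OF Suc.prems(2) ck_on_Suc_has_derivative[OF Suc.prems(1,3) \<open>x\<in>U\<close>]] .
  next
    fix b :: 'a assume b: "b \<in> Basis"
    show "Ck_on k U (\<lambda>x. L (frechet_derivative F (at x) b))"
      by (rule Suc.IH[OF Suc.prems(1,2) ck_on_frechet_derivative[OF Suc.prems(3) b]])
  qed
qed

lemma ck_on_sum:
  assumes "open U" "finite A" "\<And>i. i \<in> A \<Longrightarrow> Ck_on k U (F i)"
  shows "Ck_on k U (\<lambda>x. \<Sum>i\<in>A. F i x)"
  using assms(2,3)
proof (induction A rule: finite_induct)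
  case empty then show ?case using ck_on_const[OF assms(1)] by simp
next
  case (insert a A)
  have "Ck_on k U (\<lambda>x. F a x + (\<Sum>i\<in>A. F i x))"
    by (rule ck_on_add[OF assms(1)]) (use insert in auto)
  then show ?case using insert(1,2) by simp
qed

lemma linear_eq_sum_Basis:
  fixes L :: "'a::euclidean_space \<Rightarrow> 'b::real_vector"
  assumes "linear L"
  shows "L y = (\<Sum>i\<in>Basis. (y \<bullet> i) *\<^sub>R L i)"
proof -
  have "L y = L (\<Sum>i\<in>Basis. (y \<bullet> i) *\<^sub>R i)" by (simp only: euclidean_representation)
  also have "\<dots> = (\<Sum>i\<in>Basis. L ((y \<bullet> i) *\<^sub>R i))"
    by (rule linear_sum[OF assms])
  also have "\<dots> = (\<Sum>i\<in>Basis. (y \<bullet> i) *\<^sub>R L i)"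
    by (rule sum.cong, rule refl, rule linear_scale[OF assms])
  finally show ?thesis .
qed

lemma ck_on_compose:
  fixes G :: "'b::euclidean_space \<Rightarrow> 'c::real_normed_vector" and H :: "'a::euclidean_space \<Rightarrow> 'b"
  assumes "open U" "open V" "\<And>x. x \<in> U \<Longrightarrow> H x \<in> V"
  shows "Ck_on k V G \<Longrightarrow> Ck_on k U H \<Longrightarrow> Ck_on k U (\<lambda>x. G (H x))"
proof (induction k arbitrary: G)
  case 0
  have "continuous_on U H" "continuous_on V G" using 0 by (simp_all only: Ck_on.simps)
  moreover have "H ` U \<subseteq> V" using assms(3) by blast
  ultimately have "continuous_on U (G \<circ> H)"
    by (intro continuous_on_compose) (auto intro: continuous_on_subset)
  then show ?case by (simp only: Ck_on.simps o_def)
next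
  case (Suc k)
  txt \<open>The chain-rule derivative is expanded in the basis of the middle space, so that its
    directional derivatives are sums of products of \<open>C\<^sup>k\<close> functions.\<close>
  show ?case
  proof (rule ck_on_SucI[where F'="\<lambda>x h. \<Sum>i\<in>Basis. (frechet_derivative H (at x) h \<bullet> i) *\<^sub>R frechet_derivative G (at (H x)) i"])
    show "open U" by fact
    fix x assume x: "x \<in> U"
    have dH: "(H has_derivative frechet_derivative H (at x)) (at x)" by (rule ck_on_Suc_has_derivative[OF assms(1) Suc.prems(2) x])
    have dG: "(G has_derivative frechet_derivative G (at (H x))) (at (H x))" by (rule ck_on_Suc_has_derivative[OF assms(2) Suc.prems(1) assms(3)[OF x]])
    have lin: "linear (frechet_derivative G (at (H x)))"
      using has_derivative_bounded_linear[OF dG] bounded_linear.linear by blast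
    have chain: "((G \<circ> H) has_derivative (frechet_derivative G (at (H x)) \<circ> frechet_derivative H (at x))) (at x)"
      by (rule diff_chain_at[OF dH dG])
    have chain_eq: "(frechet_derivative G (at (H x)) \<circ> frechet_derivative H (at x)) =
        (\<lambda>h. \<Sum>i\<in>Basis. (frechet_derivative H (at x) h \<bullet> i) *\<^sub>R frechet_derivative G (at (H x)) i)"
      by (rule ext, simp only: o_def, rule linear_eq_sum_Basis[OF lin])
    show "((\<lambda>x. G (H x)) has_derivative (\<lambda>h. \<Sum>i\<in>Basis. (frechet_derivative H (at x) h \<bullet> i) *\<^sub>R frechet_derivative G (at (H x)) i)) (at x)"
      using chain[unfolded chain_eq] by (simp only: o_def)
  next
    fix b :: 'a assume b: "b \<in> Basis"
    show "Ck_on k U (\<lambda>x. \<Sum>i\<in>Basis. (frechet_derivative H (at x) b \<bullet> i) *\<^sub>R frechet_derivative G (at (H x)) i)"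
    proof (rule ck_on_sum[OF assms(1) finite_Basis])
      fix i :: 'b assume i: "i \<in> Basis"
      have DH: "Ck_on k U (\<lambda>x. frechet_derivative H (at x) b \<bullet> i)"
        by (rule ck_on_bounded_linear_comp[OF assms(1) bounded_linear_inner_left ck_on_frechet_derivative[OF Suc.prems(2) b]])
      have DG: "Ck_on k U (\<lambda>x. frechet_derivative G (at (H x)) i)"
        by (rule Suc.IH[OF ck_on_frechet_derivative[OF Suc.prems(1) i] ck_on_Suc_imp[OF Suc.prems(2)]])
      show "Ck_on k U (\<lambda>x. (frechet_derivative H (at x) b \<bullet> i) *\<^sub>R frechet_derivative G (at (H x)) i)"
        by (rule ck_on_scaleR[OF assms(1) DH DG])
    qed
  qed
qed

lemma ck_on_sin_cos: "Ck_on k UNIV (sin :: real \<Rightarrow> real) \<and> Ck_on k UNIV (cos :: real \<Rightarrow> real)"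
proof (induction k)
  case 0 then show ?case by (simp only: Ck_on.simps continuous_on_sin continuous_on_cos continuous_on_id)
next
  case (Suc k)
  have s: "Ck_on (Suc k) UNIV (sin :: real \<Rightarrow> real)"
  proof (rule ck_on_SucI[where F'="\<lambda>x h. cos x * h"])
    fix x :: real
    show "(sin has_derivative (\<lambda>h. cos x * h)) (at x)"
      using DERIV_sin[of x] by (simp add: has_field_derivative_def)
  next
    fix b :: real assume "b \<in> Basis"
    then have "b = 1" by (simp add: Basis_real_def)
    then show "Ck_on k UNIV (\<lambda>x. cos x * b)"
      using ck_on_cong[of k UNIV cos "\<lambda>x. cos x * b"] Suc.IH by simp
  qed simp
  have c: "Ck_on (Suc k) UNIV (cos :: real \<Rightarrow> real)"
  proof (rule ck_on_SucI[where F'="\<lambda>x. (*) (- sin x)"])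
    fix x :: real
    show "(cos has_derivative (*) (- sin x)) (at x)"
      using DERIV_cos[of x] by (simp only: has_field_derivative_def)
  next
    fix b :: real assume "b \<in> Basis"
    then have "b = 1" by (simp add: Basis_real_def)
    have "Ck_on k UNIV (\<lambda>x::real. (-1::real) *\<^sub>R sin x)"
      by (rule ck_on_scaleR[OF open_UNIV ck_on_const[OF open_UNIV]]) (rule conjunct1[OF Suc.IH])
    then show "Ck_on k UNIV (\<lambda>x. (*) (- sin x) b)"
      using ck_on_cong[of k UNIV "\<lambda>x::real. (-1::real) *\<^sub>R sin x" "\<lambda>x. - sin x * b"] \<open>b = 1\<close> by simp
  qed simp
  show ?case using s c by blast
qed

lemma ck_on_inverse: "Ck_on k {0<..} (inverse :: real \<Rightarrow> real)"
proof (induction k)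
  case 0 then show ?case by (simp only: Ck_on.simps) (auto intro!: continuous_intros)
next
  case (Suc k)
  show ?case
  proof (rule ck_on_SucI[where F'="\<lambda>x. (*) (- (inverse x ^ Suc (Suc 0)))"])
    fix x :: real assume "x \<in> {0<..}"
    then have "x \<noteq> 0" by simp
    show "(inverse has_derivative (*) (- (inverse x ^ Suc (Suc 0)))) (at x)"
      using DERIV_inverse[OF \<open>x \<noteq> 0\<close>, of UNIV] by (simp only: has_field_derivative_def)
  next
    fix b :: real assume "b \<in> Basis"
    then have "b = 1" by (simp add: Basis_real_def)
    have "Ck_on k {0<..} (\<lambda>x::real. (-1::real) *\<^sub>R (inverse x *\<^sub>R inverse x))"
      by (rule ck_on_scaleR[OF open_greaterThan ck_on_const[OF open_greaterThan] ck_on_scaleR[OF open_greaterThan Suc.IH Suc.IH]])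
    then show "Ck_on k {0<..} (\<lambda>x. (*) (- (inverse x ^ Suc (Suc 0))) b)"
      using ck_on_cong[of k "{0<..}" "\<lambda>x::real. (-1::real) *\<^sub>R (inverse x *\<^sub>R inverse x)" "\<lambda>x. - (inverse x ^ Suc (Suc 0)) * b"] \<open>b = 1\<close>
      by (simp add: power2_eq_square)
  qed simp
qed

lemma smooth_open_imp_continuous_on: "smooth_open U F \<Longrightarrow> continuous_on U F"
  unfolding smooth_open_def using ck_on_imp_continuous_on by blast

lemma smooth_open_subset:
  "smooth_open U F \<Longrightarrow> open V \<Longrightarrow> V \<subseteq> U \<Longrightarrow> smooth_open V F"
  unfolding smooth_open_def using ck_on_compose[of V U "\<lambda>x. x" _ F] ck_on_bounded_linear[OF _ bounded_linear_ident]
  by (metis id_apply subsetD)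

lemma smooth_open_const: "open U \<Longrightarrow> smooth_open U (\<lambda>x. c)"
  by (simp add: smooth_open_def ck_on_const)

lemma smooth_open_id: "open U \<Longrightarrow> smooth_open U (\<lambda>x. x)"
  unfolding smooth_open_def using ck_on_bounded_linear[OF _ bounded_linear_ident] by (metis id_def)

lemma smooth_open_bounded_linear_comp:
  "bounded_linear L \<Longrightarrow> smooth_open U F \<Longrightarrow> smooth_open U (\<lambda>x. L (F x))"
  unfolding smooth_open_def using ck_on_bounded_linear_comp by blast

lemma smooth_open_fst: "smooth_open U F \<Longrightarrow> smooth_open U (\<lambda>x. fst (F x))"
  by (rule smooth_open_bounded_linear_comp[OF bounded_linear_fst])

lemma smooth_open_snd: "smooth_open U F \<Longrightarrow> smooth_open U (\<lambda>x. snd (F x))"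
  by (rule smooth_open_bounded_linear_comp[OF bounded_linear_snd])

lemma smooth_open_add:
  "smooth_open U F \<Longrightarrow> smooth_open U G \<Longrightarrow> smooth_open U (\<lambda>x. F x + G x)"
  unfolding smooth_open_def using ck_on_add by blast

lemma smooth_open_scaleR:
  "smooth_open U F \<Longrightarrow> smooth_open U G \<Longrightarrow> smooth_open U (\<lambda>x. F x *\<^sub>R G x)"
  unfolding smooth_open_def using ck_on_scaleR by blast

lemma smooth_open_mult:
  "smooth_open U F \<Longrightarrow> smooth_open U G \<Longrightarrow> smooth_open U (\<lambda>x. F x * (G x :: real))"
  using smooth_open_scaleR[of U F G] by simp

lemma smooth_open_diff:
  "smooth_open U F \<Longrightarrow> smooth_open U G \<Longrightarrow> smooth_open U (\<lambda>x. F x - G x)"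
  using smooth_open_add[of U F "\<lambda>x. - G x"]
    smooth_open_bounded_linear_comp[OF bounded_linear_minus[OF bounded_linear_ident], of U G]
  by simp

lemma smooth_open_compose:
  "smooth_open V G \<Longrightarrow> smooth_open U H \<Longrightarrow> (\<And>x. x \<in> U \<Longrightarrow> H x \<in> V) \<Longrightarrow>
    smooth_open U (\<lambda>x. G (H x))"
  unfolding smooth_open_def using ck_on_compose by blast

lemma smooth_open_sin: "smooth_open U F \<Longrightarrow> smooth_open U (\<lambda>x. sin (F x :: real))"
  by (rule smooth_open_compose[of UNIV]) (auto simp: smooth_open_def ck_on_sin_cos)

lemma smooth_open_cos: "smooth_open U F \<Longrightarrow> smooth_open U (\<lambda>x. cos (F x :: real))"
  by (rule smooth_open_compose[of UNIV]) (auto simp: smooth_open_def ck_on_sin_cos)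

lemma smooth_open_divide:
  assumes "smooth_open U F" "smooth_open U G" "\<And>x. x \<in> U \<Longrightarrow> G x > (0::real)"
  shows "smooth_open U (\<lambda>x. F x / G x)"
proof -
  have "smooth_open U (\<lambda>x. inverse (G x))"
    by (rule smooth_open_compose[of "{0<..}"]) (use assms in \<open>auto simp: smooth_open_def ck_on_inverse\<close>)
  then show ?thesis
    using smooth_open_mult[OF assms(1)] by (simp add: divide_inverse)
qed

lemma smooth_open_power: "smooth_open U F \<Longrightarrow> smooth_open U (\<lambda>x. (F x :: real) ^ n)"
proof (induction n)
  case 0 then show ?case by (simp add: smooth_open_def ck_on_const)
next
  case (Suc n) then show ?case using smooth_open_mult[of U F "\<lambda>x. F x ^ n"] by simp
qed

lemma smooth_open_Pair:
  assumes F: "smooth_open U F" and G: "smooth_open U G"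
  shows "smooth_open U (\<lambda>x. (F x, G x))"
proof -
  have "smooth_open U (\<lambda>x. (F x, 0))"
    by (rule smooth_open_bounded_linear_comp[OF bounded_linear_Pair[OF bounded_linear_ident bounded_linear_zero] F])
  moreover have "smooth_open U (\<lambda>x. (0, G x))"
    by (rule smooth_open_bounded_linear_comp[OF bounded_linear_Pair[OF bounded_linear_zero bounded_linear_ident] G])
  ultimately show ?thesis using smooth_open_add by fastforce
qed

lemma smooth_on_set_common_extension:
  assumes "smooth_on_set S F" "smooth_on_set S G"
  obtains U F' G' where "S \<subseteq> U" "smooth_open U F'" "smooth_open U G'"
    "\<And>x. x \<in> S \<Longrightarrow> F' x = F x" "\<And>x. x \<in> S \<Longrightarrow> G' x = G x"
proof -
  obtain U1 F' U2 G' where U: "S \<subseteq> U1" "smooth_open U1 F'" "\<And>x. x \<in> S \<Longrightarrow> F' x = F x"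
      "S \<subseteq> U2" "smooth_open U2 G'" "\<And>x. x \<in> S \<Longrightarrow> G' x = G x"
    using assms unfolding smooth_on_set_def by metis
  then have "open (U1 \<inter> U2)" by (simp add: smooth_open_def open_Int)
  then show ?thesis
    using U smooth_open_subset[of U1 F' "U1 \<inter> U2"] smooth_open_subset[of U2 G' "U1 \<inter> U2"]
    by (intro that[of "U1 \<inter> U2" F' G']) auto
qed

section \<open>Arcs of the circle and smooth angular bumps\<close>

lemma cos_diff_eq_Re_cis: "cos (\<theta> - c) = Re (cis \<theta> * cis (- c))"
  by (simp add: cis_mult)

lemma cis_mem_arc_iff:
  assumes ab: "a < b" "b \<le> a + 2 * pi"
  shows "cis \<theta> \<in> cis ` {a<..<b} \<longleftrightarrow> cos ((b - a) / 2) < cos (\<theta> - (a + b) / 2)"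
proof
  assume "cis \<theta> \<in> cis ` {a<..<b}"
  then obtain \<phi> where ph: "a < \<phi>" "\<phi> < b" "cis \<theta> = cis \<phi>" by auto
  have "\<bar>\<phi> - (a + b) / 2\<bar> \<le> pi" "\<bar>\<phi> - (a + b) / 2\<bar> < (b - a) / 2"
    using ph ab unfolding abs_le_iff abs_less_iff by (auto simp: field_simps)
  then have "cos ((b - a) / 2) < cos \<bar>\<phi> - (a + b) / 2\<bar>"
    using ab by (subst cos_mono_less_eq) auto
  also have "\<dots> = cos (\<theta> - (a + b) / 2)"
    using cos_diff_eq_Re_cis[of \<theta>] cos_diff_eq_Re_cis[of \<phi>] ph(3) by simp
  finally show "cos ((b - a) / 2) < cos (\<theta> - (a + b) / 2)" .
next
  assume gt: "cos ((b - a) / 2) < cos (\<theta> - (a + b) / 2)"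
  define c where "c = (a + b) / 2"
  define \<phi> where "\<phi> = Arg (cis (\<theta> - c))"
  have cis_\<phi>: "cis \<phi> = cis (\<theta> - c)"
    unfolding \<phi>_def by (simp add: cis_Arg sgn_div_norm)
  have "\<bar>\<phi>\<bar> \<le> pi" unfolding \<phi>_def using Arg_bounded[of "cis (\<theta> - c)"] by linarith
  moreover have "cos ((b - a) / 2) < cos \<bar>\<phi>\<bar>"
    using gt arg_cong[OF cis_\<phi>, of Re] by (simp add: c_def)
  ultimately have "\<bar>\<phi>\<bar> < (b - a) / 2"
    using ab by (subst (asm) cos_mono_less_eq) (auto simp: field_simps)
  then have "c + \<phi> \<in> {a<..<b}" unfolding c_def abs_less_iff by (auto simp: field_simps)
  moreover have "cis (c + \<phi>) = cis \<theta>" by (simp only: cis_mult[symmetric] cis_\<phi>) (simp add: cis_mult)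
  ultimately show "cis \<theta> \<in> cis ` {a<..<b}" by (metis image_eqI)
qed

lemma arc_cosine_power_separation:
  assumes arc: "open_arc I" and P: "compact P" "P \<subseteq> I" and e: "0 < e"
  obtains q c N where "0 < q" "q < 1"
    "\<And>\<theta>. cis \<theta> \<in> P \<Longrightarrow> q \<le> (1 + cos (\<theta> - c)) / 2"
    "\<And>\<theta>. cis \<theta> \<notin> I \<Longrightarrow> ((1 + cos (\<theta> - c)) / 2) ^ N \<le> 2 * e * q ^ N"
proof -
  obtain a b where ab: "a < b" "b \<le> a + 2 * pi" "I = cis ` {a<..<b}"
    using arc unfolding open_arc_def by blast
  define c where "c = (a + b) / 2"
  define ch where "ch = cos ((b - a) / 2)"
  have ch: "-1 \<le> ch" "ch < 1"
    using ab unfolding ch_def by (auto simp: field_simps cos_mono_less_eq[of _ 0, simplified])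
  have in_P: "ch < Re (\<zeta> * cis (- c))" if "\<zeta> \<in> P" for \<zeta>
  proof -
    obtain \<theta> where "\<zeta> = cis \<theta>" "cis \<theta> \<in> I" using \<open>\<zeta> \<in> P\<close> P(2) ab(3) by blast
    then show ?thesis
      using cis_mem_arc_iff[OF ab(1,2)] ab(3) cos_diff_eq_Re_cis unfolding c_def ch_def by metis
  qed
  obtain m where m: "ch < m" "\<And>\<zeta>. \<zeta> \<in> P \<Longrightarrow> m \<le> Re (\<zeta> * cis (- c))"
  proof (cases "P = {}")
    case True then show ?thesis using that[of 1] ch by auto
  next
    case False
    have "continuous_on P (\<lambda>\<zeta>. Re (\<zeta> * cis (- c)))" by (intro continuous_intros)
    then obtain \<zeta>0 where "\<zeta>0 \<in> P" "\<And>\<zeta>. \<zeta> \<in> P \<Longrightarrow> Re (\<zeta>0 * cis (- c)) \<le> Re (\<zeta> * cis (- c))"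
      using continuous_attains_inf[OF P(1) False] by blast
    then show ?thesis using that[of "Re (\<zeta>0 * cis (- c))"] in_P by blast
  qed
  define q where "q = (1 + min m ((1 + ch) / 2)) / 2"
  define x0 where "x0 = (1 + ch) / 2"
  have q: "0 < q" "q < 1" "x0 < q" "0 \<le> x0"
    unfolding q_def x0_def using m(1) ch by (auto simp: field_simps min_def)
  obtain N where N: "(x0 / q) ^ N < 2 * e"
    using real_arch_pow_inv[of "2 * e" "x0 / q"] q e by (auto simp: field_simps)
  show ?thesis
  proof (rule that[of q c N])
    fix \<theta> assume "cis \<theta> \<in> P"
    then have "m \<le> cos (\<theta> - c)" using m(2) cos_diff_eq_Re_cis by metis
    then show "q \<le> (1 + cos (\<theta> - c)) / 2" unfolding q_def by (simp add: field_simps)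
  next
    fix \<theta> assume "cis \<theta> \<notin> I"
    then have "cos (\<theta> - c) \<le> ch"
      unfolding c_def ch_def using cis_mem_arc_iff[OF ab(1,2)] ab(3) by force
    then have "0 \<le> (1 + cos (\<theta> - c)) / 2" "(1 + cos (\<theta> - c)) / 2 \<le> x0"
      unfolding x0_def using cos_ge_minus_one[of "\<theta> - c"] by (auto simp del: cos_ge_minus_one)
    then have "((1 + cos (\<theta> - c)) / 2) ^ N \<le> x0 ^ N" by (intro power_mono)
    also have "\<dots> = (x0 / q) ^ N * q ^ N" using q by (simp add: power_divide)
    also have "\<dots> \<le> 2 * e * q ^ N" using N q by (intro mult_right_mono) auto
    finally show "((1 + cos (\<theta> - c)) / 2) ^ N \<le> 2 * e * q ^ N" .
  qed (use q in auto)
qed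

definition cutoff_arg :: "real \<Rightarrow> nat \<Rightarrow> real \<Rightarrow> real" where
  "cutoff_arg q N x = 1 + x ^ N / (q ^ N + x ^ N) / 2"

lemma cutoff_arg_bounds:
  assumes "0 < q" "0 \<le> x ^ N"
  shows "1 \<le> cutoff_arg q N x" "cutoff_arg q N x \<le> 3/2"
proof -
  define u where "u = x ^ N / (q ^ N + x ^ N)"
  have "0 < q ^ N" using assms by simp
  then have "0 \<le> u" "u \<le> 1" using assms(2) by (simp_all add: u_def divide_le_eq)
  then show "1 \<le> cutoff_arg q N x" "cutoff_arg q N x \<le> 3/2"
    unfolding cutoff_arg_def u_def[symmetric] by argo+
qed

lemma cutoff_arg_ge:
  assumes "0 < q" "q \<le> x"
  shows "5/4 \<le> cutoff_arg q N x"
proof -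
  define u where "u = x ^ N / (q ^ N + x ^ N)"
  have "0 < q ^ N" "q ^ N \<le> x ^ N" using assms by (simp_all add: power_mono)
  then have "1/2 \<le> u" by (simp add: u_def le_divide_eq)
  then show ?thesis unfolding cutoff_arg_def u_def[symmetric] by argo
qed

lemma cutoff_arg_le:
  assumes "0 < q" "0 \<le> x" "x ^ N \<le> 2 * e * q ^ N"
  shows "cutoff_arg q N x \<le> 1 + e"
proof -
  define u where "u = x ^ N / (q ^ N + x ^ N)"
  have qN: "0 < q ^ N" and xN: "0 \<le> x ^ N" using assms by simp_all
  then have "u \<le> x ^ N / q ^ N" unfolding u_def by (intro divide_left_mono) auto
  also have "\<dots> \<le> 2 * e" using assms(3) qN by (simp add: divide_le_eq)
  finally show ?thesis unfolding cutoff_arg_def u_def[symmetric] by argo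
qed

text \<open>Squaring \<open>sin (pi / 2 * _)\<close> keeps the values in \<open>[0, 1]\<close> whatever \<open>h\<close> does away from the
  levels \<open>0\<close> and \<open>1\<close>.\<close>
definition cutoff :: "(real \<Rightarrow> real) \<Rightarrow> real \<Rightarrow> nat \<Rightarrow> real \<Rightarrow> real" where
  "cutoff h q N x = (sin (pi / 2 * h (cutoff_arg q N x))) ^ 2"

lemma cutoff_bounds: "0 \<le> cutoff h q N x" "cutoff h q N x \<le> 1"
  unfolding cutoff_def using abs_sin_le_one[of "pi / 2 * h (cutoff_arg q N x)"]
  by (simp_all add: abs_square_le_1)

definition switch_on :: "(real \<Rightarrow> real) \<Rightarrow> real \<Rightarrow> real" where
  "switch_on h t = t + (1 - t) * cutoff h 1 2 t"

definition switch_off :: "(real \<Rightarrow> real) \<Rightarrow> real \<Rightarrow> real" where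
  "switch_off h t = 1 - cutoff h 1 2 (2 - t)"

text \<open>The profile will be \<open>r \<mapsto> f 1 r\<close>: it vanishes near \<open>r = 1\<close> and equals \<open>1\<close> on \<open>[5/4, 3/2]\<close>,
  so every smooth step function below is built from \<open>f\<close> itself.\<close>
locale step_profile =
  fixes h :: "real \<Rightarrow> real" and V :: "real set" and e :: real
  assumes smooth_h: "smooth_open V h" and profile_domain: "{1..3/2} \<subseteq> V"
    and e_pos: "0 < e"
    and h_low: "\<And>r. 1 \<le> r \<Longrightarrow> r \<le> 1 + e \<Longrightarrow> h r = 0"
    and h_high: "\<And>r. 5/4 \<le> r \<Longrightarrow> r \<le> 3/2 \<Longrightarrow> h r = 1"
begin

lemma cutoff_eq_one: "0 < q \<Longrightarrow> q \<le> x \<Longrightarrow> cutoff h q N x = 1"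
  using cutoff_arg_ge cutoff_arg_bounds(2)[of q x N] h_high by (simp add: cutoff_def)

lemma cutoff_eq_zero: "0 < q \<Longrightarrow> 0 \<le> x \<Longrightarrow> x ^ N \<le> 2 * e * q ^ N \<Longrightarrow> cutoff h q N x = 0"
  using cutoff_arg_le cutoff_arg_bounds(1)[of q x N] h_low by (simp add: cutoff_def)

lemma smooth_open_cutoff:
  assumes H: "smooth_open U H" "\<And>x. x \<in> U \<Longrightarrow> 0 \<le> H x ^ N" and q: "0 < q"
  shows "smooth_open U (\<lambda>x. cutoff h q N (H x))"
proof -
  have "smooth_open U (\<lambda>x. cutoff_arg q N (H x))"
    unfolding cutoff_arg_def using H q smooth_open_def
    by (intro smooth_open_add smooth_open_const smooth_open_divide smooth_open_power)
      (auto intro: add_pos_nonneg)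
  moreover have "cutoff_arg q N (H x) \<in> V" if "x \<in> U" for x
    using cutoff_arg_bounds[OF q H(2)[OF that]] profile_domain by auto
  ultimately have "smooth_open U (\<lambda>x. h (cutoff_arg q N (H x)))"
    by (rule smooth_open_compose[OF smooth_h])
  then show ?thesis
    unfolding cutoff_def using H(1) smooth_open_def
    by (intro smooth_open_power smooth_open_sin smooth_open_mult smooth_open_const) auto
qed

lemma switch_on_0: "switch_on h 0 = 0"
  using cutoff_eq_zero[of 1 0 2] e_pos by (simp add: switch_on_def)

lemma switch_on_eq_1: "1 \<le> t \<Longrightarrow> switch_on h t = 1"
  using cutoff_eq_one[of 1 t 2] by (simp add: switch_on_def)

lemma switch_on_bounds:
  assumes "0 \<le> t"
  shows "0 \<le> switch_on h t" "switch_on h t \<le> 1"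
proof (atomize (full), cases "1 \<le> t")
  case False
  then have "0 \<le> (1 - t) * cutoff h 1 2 t" "(1 - t) * cutoff h 1 2 t \<le> 1 - t"
    using cutoff_bounds[of h 1 2 t] by (simp_all add: mult_left_le)
  then show "0 \<le> switch_on h t \<and> switch_on h t \<le> 1" using assms by (simp add: switch_on_def)
qed (simp add: switch_on_eq_1)

lemma switch_on_pos: "0 < t \<Longrightarrow> 0 < switch_on h t"
  using switch_on_eq_1[of t] cutoff_bounds(1)[of h 1 2 t]
  by (cases "1 \<le> t") (auto simp: switch_on_def intro: add_pos_nonneg)

lemma switch_off_eq_0: "t \<le> 1 \<Longrightarrow> switch_off h t = 0"
  using cutoff_eq_one[of 1 "2 - t" 2] by (simp add: switch_off_def)

lemma switch_off_2: "switch_off h 2 = 1"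
  using cutoff_eq_zero[of 1 0 2] e_pos by (simp add: switch_off_def)

lemma switch_off_bounds: "0 \<le> switch_off h t" "switch_off h t \<le> 1"
  using cutoff_bounds[of h 1 2 "2 - t"] by (simp_all add: switch_off_def)

lemma smooth_open_switch_on: "smooth_open UNIV (switch_on h)"
  unfolding switch_on_def
  by (intro smooth_open_add smooth_open_id smooth_open_mult smooth_open_diff smooth_open_const
      smooth_open_cutoff) auto

lemma smooth_open_switch_off: "smooth_open UNIV (switch_off h)"
  unfolding switch_off_def
  by (intro smooth_open_diff smooth_open_const smooth_open_cutoff smooth_open_id) auto

end

context step_profile
begin

lemma arc_bump:
  assumes "open_arc I" "compact P" "P \<subseteq> I"
  obtains b :: "real \<Rightarrow> real" and kk c :: real where "smooth_open UNIV b" "\<And>\<theta>. b (\<theta> + 2 * pi) = b \<theta>"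
    "\<And>\<theta>. 0 \<le> b \<theta>" "\<And>\<theta>. b \<theta> \<le> 1"
    "\<And>\<theta>. cis \<theta> \<in> P \<Longrightarrow> b \<theta> = 1" "\<And>\<theta>. cis \<theta> \<notin> I \<Longrightarrow> b \<theta> = 0"
    "-1 < kk" "kk < 1" "\<And>\<theta>. kk \<le> cos (\<theta> - c) \<Longrightarrow> b \<theta> = 1"
proof -
  obtain q c N where q: "0 < q" "q < 1"
    and on_P: "\<And>\<theta>. cis \<theta> \<in> P \<Longrightarrow> q \<le> (1 + cos (\<theta> - c)) / 2"
    and off_I: "\<And>\<theta>. cis \<theta> \<notin> I \<Longrightarrow> ((1 + cos (\<theta> - c)) / 2) ^ N \<le> 2 * e * q ^ N"
    using arc_cosine_power_separation[OF assms e_pos] by blast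
  define b where "b \<theta> = cutoff h q N ((1 + cos (\<theta> - c)) / 2)" for \<theta>
  have nonneg: "0 \<le> (1 + cos (\<theta> - c)) / 2" for \<theta>
    using cos_ge_minus_one[of "\<theta> - c"] by (simp del: cos_ge_minus_one)
  have peak: "b \<theta> = 1" if "2 * q - 1 \<le> cos (\<theta> - c)" for \<theta>
    unfolding b_def using that q by (intro cutoff_eq_one) auto
  show ?thesis
  proof (rule that[of b "2 * q - 1" c])
    show "smooth_open UNIV b"
      unfolding b_def using nonneg
      by (intro smooth_open_cutoff smooth_open_divide smooth_open_add smooth_open_cos
          smooth_open_diff smooth_open_const smooth_open_id q) auto
    show "b (\<theta> + 2 * pi) = b \<theta>" for \<theta>
      using cos_periodic[of "\<theta> - c"] by (simp add: b_def algebra_simps)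
    show "cis \<theta> \<in> P \<Longrightarrow> b \<theta> = 1" for \<theta>
      using on_P[of \<theta>] peak[of \<theta>] by simp
    show "cis \<theta> \<notin> I \<Longrightarrow> b \<theta> = 0" for \<theta>
      unfolding b_def using q nonneg off_I by (intro cutoff_eq_zero) auto
    show "0 \<le> b \<theta>" "b \<theta> \<le> 1" for \<theta> unfolding b_def by (rule cutoff_bounds)+
    show "2 * q - 1 \<le> cos (\<theta> - c) \<Longrightarrow> b \<theta> = 1" for \<theta> by (rule peak)
  qed (use q in \<open>simp_all\<close>)
qed

text \<open>The bumps live on disjoint arcs, so their sum is again bounded by one.\<close>
lemma two_arc_bump:
  assumes arcs: "open_arc I1" "open_arc I2" and disj: "I1 \<inter> I2 = {}"
    and P: "compact P1" "P1 \<subseteq> I1" "compact P2" "P2 \<subseteq> I2"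
  obtains \<mu> :: "real \<Rightarrow> real" and kk c :: real where "smooth_open UNIV \<mu>" "\<And>\<theta>. \<mu> (\<theta> + 2 * pi) = \<mu> \<theta>"
    "\<And>\<theta>. 0 \<le> \<mu> \<theta>" "\<And>\<theta>. \<mu> \<theta> \<le> 1"
    "\<And>\<theta>. cis \<theta> \<in> P1 \<union> P2 \<Longrightarrow> \<mu> \<theta> = 1" "\<And>\<theta>. cis \<theta> \<notin> I1 \<union> I2 \<Longrightarrow> \<mu> \<theta> = 0"
    "-1 < kk" "kk < 1" "\<And>\<theta>. kk \<le> cos (\<theta> - c) \<Longrightarrow> \<mu> \<theta> = 1"
proof -
  obtain b1 :: "real \<Rightarrow> real" and kk c where b1: "smooth_open UNIV b1" "\<And>\<theta>. b1 (\<theta> + 2 * pi) = b1 \<theta>"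
    "\<And>\<theta>. 0 \<le> b1 \<theta>" "\<And>\<theta>. b1 \<theta> \<le> 1"
    "\<And>\<theta>. cis \<theta> \<in> P1 \<Longrightarrow> b1 \<theta> = 1" "\<And>\<theta>. cis \<theta> \<notin> I1 \<Longrightarrow> b1 \<theta> = 0"
    "-1 < kk" "kk < 1" "\<And>\<theta>. kk \<le> cos (\<theta> - c) \<Longrightarrow> b1 \<theta> = 1"
    by (fact arc_bump[OF arcs(1) P(1,2)])
  obtain b2 :: "real \<Rightarrow> real" where b2: "smooth_open UNIV b2" "\<And>\<theta>. b2 (\<theta> + 2 * pi) = b2 \<theta>"
    "\<And>\<theta>. 0 \<le> b2 \<theta>" "\<And>\<theta>. b2 \<theta> \<le> 1"
    "\<And>\<theta>. cis \<theta> \<in> P2 \<Longrightarrow> b2 \<theta> = 1" "\<And>\<theta>. cis \<theta> \<notin> I2 \<Longrightarrow> b2 \<theta> = 0"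
    by (rule arc_bump[OF arcs(2) P(3,4)]) blast
  have one_vanishes: "b1 \<theta> = 0 \<or> b2 \<theta> = 0" for \<theta>
    using disj b1(6) b2(6) by (metis disjoint_iff)
  have in_arc: "cis \<theta> \<in> I1" if "b1 \<theta> = 1" for \<theta>
    using that b1(6) by (metis zero_neq_one)
  show ?thesis
  proof (rule that[of "\<lambda>\<theta>. b1 \<theta> + b2 \<theta>" kk c])
    show "smooth_open UNIV (\<lambda>\<theta>. b1 \<theta> + b2 \<theta>)" by (rule smooth_open_add[OF b1(1) b2(1)])
    show "b1 \<theta> + b2 \<theta> \<le> 1" for \<theta> using one_vanishes[of \<theta>] b1(4) b2(4) by auto
    show "b1 \<theta> + b2 \<theta> = 1" if "cis \<theta> \<in> P1 \<union> P2" for \<theta>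
    proof (cases "cis \<theta> \<in> P1")
      case True
      then have "cis \<theta> \<notin> I2" using P(2) disj by blast
      then show ?thesis using b1(5) b2(6) True by simp
    next
      case False
      then have "cis \<theta> \<in> P2" "cis \<theta> \<notin> I1" using that P(4) disj by blast+
      then show ?thesis using b2(5) b1(6) by simp
    qed
    show "b1 \<theta> + b2 \<theta> = 1" if "kk \<le> cos (\<theta> - c)" for \<theta>
    proof -
      have "b1 \<theta> = 1" by (rule b1(9)[OF that])
      moreover from this have "cis \<theta> \<notin> I2" using in_arc disj by blast
      ultimately show ?thesis using b2(6) by simp
    qed
  qed (use b1 b2 in simp_all)
qed

lemma switch_for_pieces:
  assumes arcs: "open_arc I1" "open_arc I2"
    and disj: "I1 \<inter> I2 = {}" "I1 \<inter> J1 = {}" "I1 \<inter> J2 = {}" "I2 \<inter> J1 = {}" "I2 \<inter> J2 = {}"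
    and D: "compact D1" "compact D2" "D1 \<subseteq> {-2..2} \<times> I1 \<times> {1..3}" "D2 \<subseteq> {-2..2} \<times> I2 \<times> {1..3}"
    and E: "E1 \<subseteq> {-2..2} \<times> J1 \<times> {1..3}" "E2 \<subseteq> {-2..2} \<times> J2 \<times> {1..3}"
  obtains \<mu> :: "real \<Rightarrow> real" and kk c :: real where "smooth_open UNIV \<mu>" "\<And>\<theta>. \<mu> (\<theta> + 2 * pi) = \<mu> \<theta>"
    "\<And>\<theta>. 0 \<le> \<mu> \<theta>" "\<And>\<theta>. \<mu> \<theta> \<le> 1"
    "\<And>z \<theta> r. (z, cis \<theta>, r) \<in> D1 \<union> D2 \<Longrightarrow> \<mu> \<theta> = 1" "\<And>z \<theta> r. (z, cis \<theta>, r) \<in> E1 \<union> E2 \<Longrightarrow> \<mu> \<theta> = 0"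
    "-1 < kk" "kk < 1" "\<And>\<theta>. kk \<le> cos (\<theta> - c) \<Longrightarrow> \<mu> \<theta> = 1"
proof -
  have P: "compact (fst ` snd ` D1)" "fst ` snd ` D1 \<subseteq> I1" "compact (fst ` snd ` D2)" "fst ` snd ` D2 \<subseteq> I2"
    using D by (auto intro!: compact_continuous_image continuous_intros)
  obtain \<mu> :: "real \<Rightarrow> real" and kk c where \<mu>: "smooth_open UNIV \<mu>" "\<And>\<theta>. \<mu> (\<theta> + 2 * pi) = \<mu> \<theta>"
      "\<And>\<theta>. 0 \<le> \<mu> \<theta>" "\<And>\<theta>. \<mu> \<theta> \<le> 1"
      "\<And>\<theta>. cis \<theta> \<in> fst ` snd ` D1 \<union> fst ` snd ` D2 \<Longrightarrow> \<mu> \<theta> = 1"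
      "\<And>\<theta>. cis \<theta> \<notin> I1 \<union> I2 \<Longrightarrow> \<mu> \<theta> = 0"
      "-1 < kk" "kk < 1" "\<And>\<theta>. kk \<le> cos (\<theta> - c) \<Longrightarrow> \<mu> \<theta> = 1"
    by (fact two_arc_bump[OF arcs disj(1) P])
  show ?thesis
  proof (rule that[OF \<mu>(1-4) _ _ \<mu>(7-9)])
    show "\<mu> \<theta> = 1" if "(z, cis \<theta>, r) \<in> D1 \<union> D2" for z \<theta> r
      using that by (intro \<mu>(5)) force
    show "\<mu> \<theta> = 0" if "(z, cis \<theta>, r) \<in> E1 \<union> E2" for z \<theta> r
      using that E disj(2-5) by (intro \<mu>(6)) blast
  qed
qed

end

section \<open>A Lyapunov function for the blended fields\<close>

definition angular_term :: "real \<Rightarrow> real \<Rightarrow> real \<Rightarrow> real" where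
  "angular_term k c \<theta> = - sin (\<theta> - c) / (1 - k * cos (\<theta> - c))"
definition angular_term_deriv :: "real \<Rightarrow> real \<Rightarrow> real \<Rightarrow> real" where
  "angular_term_deriv k c \<theta> = (k - cos (\<theta> - c)) / (1 - k * cos (\<theta> - c)) ^ 2"

lemma one_minus_mult_cos_bounds:
  fixes x :: real
  assumes "0 < k" "k < 1"
  shows "1 - k \<le> 1 - k * cos x" "1 - k * cos x \<le> 1 + k" "0 < 1 - k * cos x"
proof -
  have a: "k * cos x \<le> k * 1" by (rule mult_left_mono[OF cos_le_one]) (use assms in simp)
  have b: "k * (-1) \<le> k * cos x" by (rule mult_left_mono[OF cos_ge_minus_one]) (use assms in simp)
  show "1 - k \<le> 1 - k * cos x" using a by linarith
  show "1 - k * cos x \<le> 1 + k" using b by linarith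
  show "0 < 1 - k * cos x" using a assms by linarith
qed

lemma has_real_derivative_angular_term:
  assumes "0 < k" "k < 1"
  shows "(angular_term k c has_real_derivative angular_term_deriv k c \<theta>) (at \<theta>)"
proof -
  have d: "1 - k * cos (\<theta> - c) \<noteq> 0" using one_minus_mult_cos_bounds(3)[OF assms, of "\<theta> - c"] by (metis less_irrefl)
  have A: "((\<lambda>\<theta>. sin (\<theta> - c)) has_real_derivative cos (\<theta> - c)) (at \<theta>)"
    by (rule derivative_eq_intros refl | simp)+
  have A': "((\<lambda>\<theta>. - sin (\<theta> - c)) has_real_derivative - cos (\<theta> - c)) (at \<theta>)"
    using DERIV_minus[OF A] .
  have B: "((\<lambda>\<theta>. 1 - k * cos (\<theta> - c)) has_real_derivative k * sin (\<theta> - c)) (at \<theta>)"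
    by (rule derivative_eq_intros refl | simp)+
  have "((\<lambda>\<theta>. - sin (\<theta> - c) / (1 - k * cos (\<theta> - c))) has_real_derivative
     ((- cos (\<theta> - c)) * (1 - k * cos (\<theta> - c)) - (- sin (\<theta> - c)) * (k * sin (\<theta> - c)))
       / ((1 - k * cos (\<theta> - c)) * (1 - k * cos (\<theta> - c)))) (at \<theta>)"
    by (rule DERIV_divide[OF A' B d])
  moreover have "((- cos (\<theta> - c)) * (1 - k * cos (\<theta> - c)) - (- sin (\<theta> - c)) * (k * sin (\<theta> - c)))
       / ((1 - k * cos (\<theta> - c)) * (1 - k * cos (\<theta> - c))) = angular_term_deriv k c \<theta>"
  proof -
    have e: "sin (\<theta> - c) * sin (\<theta> - c) = 1 - cos (\<theta> - c) * cos (\<theta> - c)"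
      using sin_cos_squared_add3[of "\<theta> - c"] by linarith
    have "(- cos (\<theta> - c)) * (1 - k * cos (\<theta> - c)) - (- sin (\<theta> - c)) * (k * sin (\<theta> - c))
        = k - cos (\<theta> - c)" using e by algebra
    then show ?thesis unfolding angular_term_deriv_def by (simp add: power2_eq_square)
  qed
  ultimately show ?thesis unfolding angular_term_def[abs_def] by simp
qed

lemma abs_angular_term_le:
  assumes "0 < k" "k < 1"
  shows "\<bar>angular_term k c \<theta>\<bar> \<le> 1 / (1 - k)"
proof -
  have d: "1 - k \<le> 1 - k * cos (\<theta> - c)" "0 < 1 - k" using one_minus_mult_cos_bounds[OF assms, of "\<theta> - c"] assms by auto
  have "\<bar>angular_term k c \<theta>\<bar> = \<bar>sin (\<theta> - c)\<bar> / (1 - k * cos (\<theta> - c))"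
    unfolding angular_term_def using d by (simp add: abs_divide)
  also have "\<dots> \<le> 1 / (1 - k * cos (\<theta> - c))"
    using d by (intro divide_right_mono) auto
  also have "\<dots> \<le> 1 / (1 - k)" using d by (intro divide_left_mono) auto
  finally show ?thesis .
qed

lemma abs_angular_term_deriv_le:
  assumes "0 < k" "k < 1"
  shows "\<bar>angular_term_deriv k c \<theta>\<bar> \<le> 2 / (1 - k) ^ 2"
proof -
  have d: "1 - k \<le> 1 - k * cos (\<theta> - c)" "0 < 1 - k" using one_minus_mult_cos_bounds[OF assms, of "\<theta> - c"] assms by auto
  have n: "\<bar>k - cos (\<theta> - c)\<bar> \<le> 2" using assms abs_cos_le_one[of "\<theta> - c"] by linarith
  have sq: "(1 - k) ^ 2 \<le> (1 - k * cos (\<theta> - c)) ^ 2" using d by (intro power_mono) auto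
  have "\<bar>angular_term_deriv k c \<theta>\<bar> = \<bar>k - cos (\<theta> - c)\<bar> / (1 - k * cos (\<theta> - c)) ^ 2"
    unfolding angular_term_deriv_def by (simp add: abs_divide)
  also have "\<dots> \<le> 2 / (1 - k * cos (\<theta> - c)) ^ 2"
    using n by (intro divide_right_mono) auto
  also have "\<dots> \<le> 2 / (1 - k) ^ 2" using d sq by (intro divide_left_mono) auto
  finally show ?thesis .
qed

lemma angular_term_deriv_ge:
  assumes "0 < k" "k < 1" "cos (\<theta> - c) \<le> kk" "kk < k"
  shows "(k - kk) / 4 \<le> angular_term_deriv k c \<theta>"
proof -
  have d: "0 < 1 - k * cos (\<theta> - c)" "1 - k * cos (\<theta> - c) \<le> 2" using one_minus_mult_cos_bounds[OF assms(1,2), of "\<theta> - c"] assms by auto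
  have sq: "(1 - k * cos (\<theta> - c)) ^ 2 \<le> 4"
  proof -
    have "(1 - k * cos (\<theta> - c)) ^ 2 \<le> 2 ^ 2" using d by (intro power_mono) auto
    then show ?thesis by simp
  qed
  have n: "k - kk \<le> k - cos (\<theta> - c)" using assms by linarith
  have "(k - kk) / 4 \<le> (k - kk) / (1 - k * cos (\<theta> - c)) ^ 2"
    using d sq assms by (intro divide_left_mono) auto
  also have "\<dots> \<le> (k - cos (\<theta> - c)) / (1 - k * cos (\<theta> - c)) ^ 2"
    using n d by (intro divide_right_mono) auto
  finally show ?thesis unfolding angular_term_deriv_def .
qed

text \<open>The derivative of \<open>z (1 + e \<psi>(\<theta>))\<close> along the blended field, written with the weight
  \<open>s\<close>, \<open>G = g z r\<close>, \<open>P = z f z r\<close>, \<open>ps = \<psi>(\<theta>)\<close> and \<open>dp = \<psi>'(\<theta>)\<close>; the two cases are \<open>\<theta>\<close> on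
  the arc where the weight is at least \<open>cc\<close>, and \<open>\<theta>\<close> off it.\<close>
lemma lyapunov_rate_ge:
  fixes s G P M ps dp B B' e cc kap m :: real
  assumes s: "0 \<le> s" "s \<le> 1" and G: "0 \<le> G" and P: "0 \<le> P" "P \<le> M"
    and ps: "\<bar>ps\<bar> \<le> B" and dp: "\<bar>dp\<bar> \<le> B'" and e: "0 < e" "e * B \<le> 1/2" "e * B' * M \<le> cc / 4"
    and cases: "cc \<le> s \<or> (kap \<le> dp \<and> m \<le> G / 2 + e * kap * P)"
  shows "min (cc / 4) (min m (1/2)) \<le> ((1 - s) * G + s) * (1 + e * ps) + e * dp * (1 - s) * P"
proof -
  define A where "A = (1 - s) * G + s"
  have A0: "0 \<le> A" unfolding A_def using s G by simp
  have "\<bar>e * ps\<bar> \<le> e * B" using e ps by (simp add: abs_mult mult_left_mono)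
  then have eps: "1/2 \<le> 1 + e * ps" using e by linarith
  have T1: "A / 2 \<le> A * (1 + e * ps)"
  proof -
    have "A * (1/2) \<le> A * (1 + e * ps)" using A0 eps by (rule mult_left_mono[rotated])
    then show ?thesis by simp
  qed
  show ?thesis
  proof (cases "cc \<le> s")
    case True
    have As: "cc \<le> A" unfolding A_def using s G True by (smt (verit) mult_nonneg_nonneg)
    have "\<bar>e * dp * (1 - s) * P\<bar> = e * \<bar>dp\<bar> * (1 - s) * P" using e s P by (simp add: abs_mult)
    also have "\<dots> \<le> e * B' * 1 * M"
      using e s P dp by (intro mult_mono) auto
    finally have "\<bar>e * dp * (1 - s) * P\<bar> \<le> cc / 4" using e by simp
    then have "- (cc / 4) \<le> e * dp * (1 - s) * P" by linarith
    moreover have "cc / 2 \<le> A / 2" using As by simp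
    ultimately have "cc / 4 \<le> A * (1 + e * ps) + e * dp * (1 - s) * P" using T1 by linarith
    then show ?thesis unfolding A_def by linarith
  next
    case False
    then have c2: "kap \<le> dp" "m \<le> G / 2 + e * kap * P" using cases by auto
    have sP: "0 \<le> (1 - s) * P" using s P by simp
    have "e * kap * ((1 - s) * P) \<le> e * dp * ((1 - s) * P)"
      using c2(1) e sP by (intro mult_right_mono mult_left_mono) auto
    then have T2: "e * kap * (1 - s) * P \<le> e * dp * (1 - s) * P" by (simp add: mult.assoc)
    have "(1 - s) * m \<le> (1 - s) * (G / 2 + e * kap * P)" using c2(2) s by (intro mult_left_mono) auto
    moreover have "A / 2 + e * kap * (1 - s) * P = (1 - s) * (G / 2 + e * kap * P) + s / 2"
      unfolding A_def by (simp add: field_simps)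
    moreover have "min m (1/2) \<le> (1 - s) * m + s * (1/2)"
    proof -
      have "(1 - s) * min m (1/2) \<le> (1 - s) * m" using s by (intro mult_left_mono) auto
      moreover have "s * min m (1/2) \<le> s * (1/2)" using s by (intro mult_left_mono) auto
      ultimately show ?thesis by (simp add: algebra_simps)
    qed
    ultimately have "min m (1/2) \<le> A * (1 + e * ps) + e * dp * (1 - s) * P" using T1 T2 by linarith
    then show ?thesis unfolding A_def by linarith
  qed
qed

lemma has_vector_derivative_fst:
  "(\<gamma> has_vector_derivative v) F \<Longrightarrow> ((\<lambda>s. fst (\<gamma> s)) has_real_derivative fst v) F"
  unfolding has_real_derivative_iff_has_vector_derivative has_vector_derivative_def
  by (drule has_derivative_fst) simp

lemma has_vector_derivative_snd:
  "(\<gamma> has_vector_derivative v) F \<Longrightarrow> ((\<lambda>s. snd (\<gamma> s)) has_vector_derivative snd v) F"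
  unfolding has_vector_derivative_def by (drule has_derivative_snd) simp

lemma is_traj_at_interior:
  assumes "is_traj V T \<gamma>" "\<tau> \<in> interior T"
  shows "(\<gamma> has_vector_derivative V (\<gamma> \<tau>)) (at \<tau>)" "\<gamma> \<tau> \<in> Wlift"
proof -
  have "\<tau> \<in> T" using assms(2) interior_subset by blast
  then have d: "(\<gamma> has_vector_derivative V (\<gamma> \<tau>)) (at \<tau> within T)" "\<gamma> \<tau> \<in> Wlift"
    using assms(1) unfolding is_traj_def by auto
  show "\<gamma> \<tau> \<in> Wlift" by (fact d(2))
  have "(\<gamma> has_vector_derivative V (\<gamma> \<tau>)) (at \<tau> within interior T)"
    using d(1) interior_subset by (rule has_vector_derivative_within_subset)
  then show "(\<gamma> has_vector_derivative V (\<gamma> \<tau>)) (at \<tau>)"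
    using at_within_open[OF assms(2) open_interior] by simp
qed

lemma has_closed_orbit_imp_has_trapped_orbit: "has_closed_orbit V \<Longrightarrow> has_trapped_orbit V"
  unfolding has_closed_orbit_def has_trapped_orbit_def is_traj_def
  by (metis has_vector_derivative_at_within iso_tuple_UNIV_I)

locale lyapunov_function =
  fixes V :: "real \<times> real \<times> real \<Rightarrow> real \<times> real \<times> real" and L :: "real \<times> real \<times> real \<Rightarrow> real"
    and C \<delta> :: real
  assumes rate_pos: "0 < \<delta>"
    and bounded: "\<And>p. p \<in> Wlift \<Longrightarrow> \<bar>L p\<bar> \<le> C"
    and rate: "\<And>\<gamma> \<tau>. (\<gamma> has_vector_derivative V (\<gamma> \<tau>)) (at \<tau>) \<Longrightarrow> \<gamma> \<tau> \<in> Wlift \<Longrightarrow>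
                 \<exists>D\<ge>\<delta>. ((\<lambda>\<tau>. L (\<gamma> \<tau>)) has_real_derivative D) (at \<tau>)"
begin

lemma growth:
  assumes "is_traj V T \<gamma>" "{a..b} \<subseteq> interior T" "a \<le> b"
  shows "L (\<gamma> a) + \<delta> * (b - a) \<le> L (\<gamma> b)"
proof -
  have "(\<lambda>\<tau>. L (\<gamma> \<tau>) - \<delta> * \<tau>) a \<le> (\<lambda>\<tau>. L (\<gamma> \<tau>) - \<delta> * \<tau>) b"
  proof (rule DERIV_nonneg_imp_nondecreasing[OF assms(3)])
    fix x assume "a \<le> x" "x \<le> b"
    then have "x \<in> interior T" using assms(2) by auto
    then obtain D where "\<delta> \<le> D" "((\<lambda>\<tau>. L (\<gamma> \<tau>)) has_real_derivative D) (at x)"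
      using rate is_traj_at_interior[OF assms(1)] by blast
    then show "\<exists>y. ((\<lambda>\<tau>. L (\<gamma> \<tau>) - \<delta> * \<tau>) has_real_derivative y) (at x) \<and> 0 \<le> y"
      by (intro exI[of _ "D - \<delta> * 1"]) (auto intro!: derivative_eq_intros)
  qed
  then show ?thesis by (simp add: algebra_simps)
qed

theorem no_trapped_orbit: "\<not> has_trapped_orbit V"
proof
  define T where "T = (2 * C + 1) / \<delta>"
  have T: "0 \<le> T" "\<delta> * T = 2 * C + 1"
    using rate_pos bounded[of "(0, 0, 1)"] unfolding T_def by (auto simp: Wlift_def)
  have in_W: "\<gamma> \<tau> \<in> Wlift" if "is_traj V S \<gamma>" "\<tau> \<in> S" for \<gamma> S \<tau>
    using that unfolding is_traj_def by blast
  assume "has_trapped_orbit V"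
  then obtain \<gamma> where "is_traj V {0..} \<gamma> \<or> is_traj V {..0} \<gamma>"
    unfolding has_trapped_orbit_def by blast
  then obtain a b where "L (\<gamma> a) + \<delta> * T \<le> L (\<gamma> b)" "\<gamma> a \<in> Wlift" "\<gamma> b \<in> Wlift"
  proof
    assume tr: "is_traj V {0..} \<gamma>"
    have "{1..1 + T} \<subseteq> interior {0..}" by auto
    then show thesis
      using growth[OF tr, of 1 "1 + T"] in_W[OF tr] T that[of 1 "1 + T"] by simp
  next
    assume tr: "is_traj V {..0} \<gamma>"
    have "{- 1 - T..- 1} \<subseteq> interior {..0}" by auto
    then show thesis
      using growth[OF tr, of "- 1 - T" "- 1"] in_W[OF tr] T that[of "- 1 - T" "- 1"] by simp
  qed
  then show False using bounded[of "\<gamma> a"] bounded[of "\<gamma> b"] T(2) by linarith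
qed

end

lemma compact_continuous_on_bounded_above:
  fixes h :: "'a::topological_space \<Rightarrow> real"
  assumes "compact K" "continuous_on K h"
  obtains M where "0 < M" "\<And>p. p \<in> K \<Longrightarrow> h p \<le> M"
proof -
  obtain B where "\<And>p. p \<in> K \<Longrightarrow> \<bar>h p\<bar> \<le> B"
    using compact_imp_bounded[OF compact_continuous_image[OF assms(2,1)]]
    unfolding bounded_iff by auto
  then show ?thesis using that[of "\<bar>B\<bar> + 1"] by fastforce
qed

lemma compact_continuous_on_pos_bounded_below:
  fixes h :: "'a::topological_space \<Rightarrow> real"
  assumes "compact K" "continuous_on K h" "\<And>p. p \<in> K \<Longrightarrow> 0 < h p"
  obtains m where "0 < m" "\<And>p. p \<in> K \<Longrightarrow> m \<le> h p"
proof (cases "K = {}")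
  case False
  then obtain p0 where "p0 \<in> K" "\<And>p. p \<in> K \<Longrightarrow> h p0 \<le> h p"
    using continuous_attains_inf[OF assms(1) False assms(2)] by blast
  then show ?thesis using that assms(3) by blast
qed (use that[of 1] in auto)

lemma has_real_derivative_tilted_height:
  assumes "(\<gamma> has_vector_derivative (a, b, c')) (at \<tau>)" "\<gamma> \<tau> = (z, \<theta>, r)" "0 < k" "k < 1"
  shows "((\<lambda>\<tau>. fst (\<gamma> \<tau>) * (1 + e * angular_term k c (fst (snd (\<gamma> \<tau>))))) has_real_derivative
           a * (1 + e * angular_term k c \<theta>) + e * angular_term_deriv k c \<theta> * b * z) (at \<tau>)"
proof -
  have z': "((\<lambda>\<tau>. fst (\<gamma> \<tau>)) has_real_derivative a) (at \<tau>)"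
    using has_vector_derivative_fst[OF assms(1)] by simp
  have "((\<lambda>\<tau>. fst (snd (\<gamma> \<tau>))) has_real_derivative b) (at \<tau>)"
    using has_vector_derivative_fst[OF has_vector_derivative_snd[OF assms(1)]] by simp
  then have "((\<lambda>\<tau>. angular_term k c (fst (snd (\<gamma> \<tau>)))) has_real_derivative angular_term_deriv k c \<theta> * b) (at \<tau>)"
    using DERIV_chain2[OF has_real_derivative_angular_term[OF assms(3,4)]] assms(2) by fastforce
  from DERIV_mult[OF z' DERIV_add[OF DERIV_const[of 1] DERIV_cmult[OF this, of e]]] show ?thesis
    using assms(2) by (simp add: algebra_simps)
qed

lemma blend_no_trapped_orbit:
  fixes V :: "real \<times> real \<times> real \<Rightarrow> real \<times> real \<times> real" and g f :: "real \<Rightarrow> real \<Rightarrow> real"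
    and s :: "real \<Rightarrow> real"
  assumes V: "\<And>z \<theta> r. (z, \<theta>, r) \<in> Wlift \<Longrightarrow> V (z, \<theta>, r) = ((1 - s \<theta>) * g z r + s \<theta>, (1 - s \<theta>) * f z r, 0)"
    and s0: "\<And>\<theta>. 0 \<le> s \<theta>" and s1: "\<And>\<theta>. s \<theta> \<le> 1"
    and s_big: "\<And>\<theta>. kk \<le> cos (\<theta> - c) \<Longrightarrow> cc \<le> s \<theta>"
    and cc: "0 < cc" and kk: "-1 < kk" "kk < 1"
    and g_nonneg: "\<And>z r. z \<in> {-2..2} \<Longrightarrow> r \<in> {1..3} \<Longrightarrow> 0 \<le> g z r"
    and zf_nonneg: "\<And>z r. z \<in> {-2..2} \<Longrightarrow> r \<in> {1..3} \<Longrightarrow> 0 \<le> z * f z r"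
    and zf_pos: "\<And>z r. z \<in> {-2..2} \<Longrightarrow> r \<in> {1..3} \<Longrightarrow> g z r = 0 \<Longrightarrow> 0 < z * f z r"
    and cont_g: "continuous_on ({-2..2} \<times> {1..3}) (\<lambda>p. g (fst p) (snd p))"
    and cont_f: "continuous_on ({-2..2} \<times> {1..3}) (\<lambda>p. f (fst p) (snd p))"
  shows "\<not> has_trapped_orbit V"
proof -
  define K where "K = {-2..2::real} \<times> {1..3::real}"
  have K: "compact K" unfolding K_def by (intro compact_Times compact_Icc)
  have "continuous_on K (\<lambda>p. fst p * f (fst p) (snd p))"
    unfolding K_def by (intro continuous_intros cont_f)
  then obtain M where M: "0 < M" "\<And>p. p \<in> K \<Longrightarrow> fst p * f (fst p) (snd p) \<le> M"
    using compact_continuous_on_bounded_above[OF K] by blast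
  define k where "k = (1 + kk) / 2"
  have k: "0 < k" "k < 1" "kk < k" unfolding k_def using kk by auto
  define B where "B = 1 / (1 - k)"
  define B' where "B' = 2 / (1 - k) ^ 2"
  have BB: "0 < B" "0 < B'" unfolding B_def B'_def using k by auto
  define e where "e = min (1 / (2 * B)) (cc / (4 * B' * M))"
  have e: "0 < e" "e * B \<le> 1/2" "e * B' * M \<le> cc / 4"
  proof -
    show "0 < e" unfolding e_def using BB cc M by auto
    have "e * B \<le> 1 / (2 * B) * B" unfolding e_def using BB by (intro mult_right_mono) auto
    then show "e * B \<le> 1/2" using BB by simp
    have "e * (B' * M) \<le> cc / (4 * B' * M) * (B' * M)" unfolding e_def using BB M by (intro mult_right_mono) auto
    then show "e * B' * M \<le> cc / 4" using BB M by (simp add: mult.assoc)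
  qed
  define \<kappa> where "\<kappa> = (k - kk) / 4"
  have \<kappa>: "0 < \<kappa>" unfolding \<kappa>_def using k by simp
  obtain m where m: "0 < m" "\<And>z r. (z, r) \<in> K \<Longrightarrow> m \<le> g z r / 2 + e * \<kappa> * (z * f z r)"
  proof (rule compact_continuous_on_pos_bounded_below[OF K])
    show "continuous_on K (\<lambda>p. g (fst p) (snd p) / 2 + e * \<kappa> * (fst p * f (fst p) (snd p)))"
      unfolding K_def by (intro continuous_intros cont_f cont_g) simp
    show "0 < g (fst p) (snd p) / 2 + e * \<kappa> * (fst p * f (fst p) (snd p))" if pK: "p \<in> K" for p
    proof -
      obtain z r where p: "p = (z, r)" "z \<in> {-2..2}" "r \<in> {1..3}" using pK K_def by auto
      have "0 \<le> g z r" "0 \<le> e * \<kappa> * (z * f z r)"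
        using e(1) \<kappa> g_nonneg[OF p(2,3)] zf_nonneg[OF p(2,3)] by simp_all
      then show ?thesis
        using zf_pos[OF p(2,3)] e(1) \<kappa> p(1) by (cases "g z r = 0") auto
    qed
  qed auto
  define \<delta> where "\<delta> = min (cc / 4) (min m (1/2))"
  interpret lyapunov_function V "\<lambda>p. fst p * (1 + e * angular_term k c (fst (snd p)))" 3 \<delta>
  proof
    show "0 < \<delta>" unfolding \<delta>_def using cc m by simp
  next
    fix p :: "real \<times> real \<times> real" assume "p \<in> Wlift"
    then have z: "\<bar>fst p\<bar> \<le> 2" unfolding Wlift_def by auto
    have "\<bar>e * angular_term k c (fst (snd p))\<bar> \<le> e * B"
      using mult_left_mono[OF abs_angular_term_le[OF k(1,2)], of e] e(1)
      unfolding B_def by (simp add: abs_mult)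
    then have "\<bar>1 + e * angular_term k c (fst (snd p))\<bar> \<le> 3/2" using e(2) by linarith
    from mult_mono[OF z this] show "\<bar>fst p * (1 + e * angular_term k c (fst (snd p)))\<bar> \<le> 3"
      unfolding abs_mult by simp
  next
    fix \<gamma> and \<tau> :: real
    assume d: "(\<gamma> has_vector_derivative V (\<gamma> \<tau>)) (at \<tau>)" and w: "\<gamma> \<tau> \<in> Wlift"
    obtain z \<theta> r where p: "\<gamma> \<tau> = (z, \<theta>, r)" by (metis prod.collapse)
    have dom: "z \<in> {-2..2}" "r \<in> {1..3}" using w p unfolding Wlift_def by auto
    have cases: "cc \<le> s \<theta> \<or> (\<kappa> \<le> angular_term_deriv k c \<theta> \<and> m \<le> g z r / 2 + e * \<kappa> * (z * f z r))"
    proof (cases "kk \<le> cos (\<theta> - c)")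
      case True then show ?thesis using s_big by blast
    next
      case False
      then have "\<kappa> \<le> angular_term_deriv k c \<theta>"
        unfolding \<kappa>_def using angular_term_deriv_ge[OF k(1,2) _ k(3)] by simp
      moreover have "m \<le> g z r / 2 + e * \<kappa> * (z * f z r)" using m(2) dom unfolding K_def by simp
      ultimately show ?thesis by blast
    qed
    have rate: "\<delta> \<le> ((1 - s \<theta>) * g z r + s \<theta>) * (1 + e * angular_term k c \<theta>)
                + e * angular_term_deriv k c \<theta> * (1 - s \<theta>) * (z * f z r)"
      unfolding \<delta>_def
      by (rule lyapunov_rate_ge[OF s0 s1 g_nonneg[OF dom] zf_nonneg[OF dom] M(2)[of "(z, r)", simplified]
            abs_angular_term_le[OF k(1,2)] abs_angular_term_deriv_le[OF k(1,2)] e[unfolded B_def B'_def] cases])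
        (use dom in \<open>simp add: K_def\<close>)
    have "V (\<gamma> \<tau>) = ((1 - s \<theta>) * g z r + s \<theta>, (1 - s \<theta>) * f z r, 0)"
      using V w p by simp
    from has_real_derivative_tilted_height[OF d[unfolded this] p k(1,2), of e c] rate show "\<exists>D\<ge>\<delta>. ((\<lambda>\<tau>. fst (\<gamma> \<tau>) * (1 + e * angular_term k c (fst (snd (\<gamma> \<tau>)))))
                        has_real_derivative D) (at \<tau>)"
      by (intro exI conjI) (auto simp: algebra_simps)
  qed
  show ?thesis by (rule no_trapped_orbit)
qed

section \<open>The deformation\<close>

definition deformation ::
  "(real \<times> real \<Rightarrow> real) \<Rightarrow> (real \<times> real \<Rightarrow> real) \<Rightarrow> (real \<Rightarrow> real \<Rightarrow> real) \<Rightarrow>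
     real \<Rightarrow> real \<times> real \<times> real \<Rightarrow> real \<times> real \<times> real" where
  "deformation F G w t p =
     (let s = w t (fst (snd p)); zr = (fst p, snd (snd p)) in ((1 - s) * G zr + s, (1 - s) * F zr, 0))"

lemma deformation_apply:
  "deformation F G w t (z, \<theta>, r) = ((1 - w t \<theta>) * G (z, r) + w t \<theta>, (1 - w t \<theta>) * F (z, r), 0)"
  by (simp add: deformation_def Let_def)

lemma smooth_open_deformation:
  assumes F: "smooth_open U F" and G: "smooth_open U G"
    and w: "smooth_open UNIV (\<lambda>q. w (fst q) (snd q))"
  shows "smooth_open ((\<lambda>q. (fst (snd q), snd (snd (snd q)))) -` U) (\<lambda>q. deformation F G w (fst q) (snd q))"
proof -
  let ?O = "(\<lambda>q::real \<times> real \<times> real \<times> real. (fst (snd q), snd (snd (snd q)))) -` U"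
  have "open ?O"
    using F unfolding smooth_open_def by (intro continuous_open_vimage continuous_intros) auto
  then have zr: "smooth_open ?O (\<lambda>q. (fst (snd q), snd (snd (snd q))))"
    by (intro smooth_open_Pair smooth_open_fst smooth_open_snd smooth_open_id)
  have "smooth_open ?O (\<lambda>q. w (fst q) (fst (snd (snd q))))"
    using \<open>open ?O\<close>
    by (intro smooth_open_compose[OF w, of ?O "\<lambda>q. (fst q, fst (snd (snd q)))", simplified]
        smooth_open_Pair smooth_open_fst smooth_open_snd smooth_open_id) auto
  moreover have "smooth_open ?O (\<lambda>q. F (fst (snd q), snd (snd (snd q))))"
    "smooth_open ?O (\<lambda>q. G (fst (snd q), snd (snd (snd q))))"
    using smooth_open_compose[OF F zr] smooth_open_compose[OF G zr] by auto
  ultimately show ?thesis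
    unfolding deformation_def Let_def using \<open>open ?O\<close>
    by (intro smooth_open_Pair smooth_open_add smooth_open_mult smooth_open_diff smooth_open_const)
qed

definition blend_weight :: "(real \<Rightarrow> real) \<Rightarrow> (real \<Rightarrow> real) \<Rightarrow> real \<Rightarrow> real \<Rightarrow> real" where
  "blend_weight h \<mu> t \<theta> = switch_on h t * \<mu> \<theta> + switch_off h t * (1 - \<mu> \<theta>)"

context step_profile
begin

lemma smooth_open_blend_weight:
  assumes "smooth_open UNIV \<mu>"
  shows "smooth_open UNIV (\<lambda>q. blend_weight h \<mu> (fst q) (snd q))"
proof -
  have "smooth_open UNIV (\<lambda>q::real \<times> real. fst q)" "smooth_open UNIV (\<lambda>q::real \<times> real. snd q)"
    by (intro smooth_open_fst smooth_open_snd smooth_open_id open_UNIV)+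
  then show ?thesis
    unfolding blend_weight_def
    by (intro smooth_open_add smooth_open_mult smooth_open_diff smooth_open_const open_UNIV
        smooth_open_compose[OF smooth_open_switch_on] smooth_open_compose[OF smooth_open_switch_off]
        smooth_open_compose[OF assms]) auto
qed

lemma blend_weight_bounds:
  assumes "0 \<le> t" "0 \<le> \<mu> \<theta>" "\<mu> \<theta> \<le> 1"
  shows "0 \<le> blend_weight h \<mu> t \<theta>" "blend_weight h \<mu> t \<theta> \<le> 1"
proof -
  have "switch_on h t * \<mu> \<theta> \<le> \<mu> \<theta>" "switch_off h t * (1 - \<mu> \<theta>) \<le> 1 - \<mu> \<theta>"
    using assms switch_on_bounds switch_off_bounds by (simp_all add: mult_left_le_one_le)
  then show "0 \<le> blend_weight h \<mu> t \<theta>" "blend_weight h \<mu> t \<theta> \<le> 1"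
    using assms switch_on_bounds switch_off_bounds by (simp_all add: blend_weight_def)
qed

lemma blend_weight_0: "blend_weight h \<mu> 0 \<theta> = 0"
  by (simp add: blend_weight_def switch_on_0 switch_off_eq_0)

lemma blend_weight_2: "blend_weight h \<mu> 2 \<theta> = 1"
  by (simp add: blend_weight_def switch_on_eq_1 switch_off_2)

lemma blend_weight_eq_1: "1 \<le> t \<Longrightarrow> \<mu> \<theta> = 1 \<Longrightarrow> blend_weight h \<mu> t \<theta> = 1"
  by (simp add: blend_weight_def switch_on_eq_1)

lemma blend_weight_eq_0: "t \<le> 1 \<Longrightarrow> \<mu> \<theta> = 0 \<Longrightarrow> blend_weight h \<mu> t \<theta> = 0"
  by (simp add: blend_weight_def switch_off_eq_0)

end

lemma mult_nonneg_if_odd: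
  fixes \<phi> :: "real \<Rightarrow> real"
  assumes odd: "\<phi> (- z) = - \<phi> z" and pos: "\<And>x. 0 < x \<Longrightarrow> x \<le> \<bar>z\<bar> \<Longrightarrow> 0 \<le> \<phi> x"
  shows "0 \<le> z * \<phi> z"
proof (cases "0 \<le> z")
  case True
  then show ?thesis using pos[of z] by (cases "z = 0") auto
next
  case False
  then show ?thesis using pos[of "- z"] odd by (simp add: mult_nonpos_nonpos)
qed

lemma step_profile_of_section:
  fixes F :: "real \<times> real \<Rightarrow> real"
  assumes F: "smooth_open U F" "\<And>r. 1 \<le> r \<Longrightarrow> r \<le> 3/2 \<Longrightarrow> (1, r) \<in> U" and e: "0 < e"
    and low: "\<And>r. 1 \<le> r \<Longrightarrow> r \<le> 1 + e \<Longrightarrow> F (1, r) = 0"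
    and high: "\<And>r. 5/4 \<le> r \<Longrightarrow> r \<le> 3/2 \<Longrightarrow> F (1, r) = 1"
  shows "step_profile (\<lambda>r. F (1, r)) ((\<lambda>r. (1, r)) -` U) e"
proof
  have "open ((\<lambda>r::real. (1::real, r)) -` U)"
    using F(1) unfolding smooth_open_def by (intro continuous_open_vimage continuous_intros) auto
  then show "smooth_open ((\<lambda>r. (1, r)) -` U) (\<lambda>r. F (1, r))"
    by (intro smooth_open_compose[OF F(1)] smooth_open_Pair smooth_open_const smooth_open_id) auto
qed (use F(2) e low high in auto)

locale deformation_data = step_profile h H e for h H e +
  fixes f g :: "real \<Rightarrow> real \<Rightarrow> real" and Gf Gg :: "real \<times> real \<Rightarrow> real" and U :: "(real \<times> real) set"
    and \<mu> :: "real \<Rightarrow> real" and kk c :: real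
  assumes smooth_Gf: "smooth_open U Gf" and smooth_Gg: "smooth_open U Gg"
    and domain: "{-2..2} \<times> {1..3} \<subseteq> U"
    and Gf_eq: "\<And>z r. z \<in> {-2..2} \<Longrightarrow> r \<in> {1..3} \<Longrightarrow> Gf (z, r) = f z r"
    and Gg_eq: "\<And>z r. z \<in> {-2..2} \<Longrightarrow> r \<in> {1..3} \<Longrightarrow> Gg (z, r) = g z r"
    and g_nonneg: "\<And>z r. z \<in> {-2..2} \<Longrightarrow> r \<in> {1..3} \<Longrightarrow> 0 \<le> g z r"
    and zf_nonneg: "\<And>z r. z \<in> {-2..2} \<Longrightarrow> r \<in> {1..3} \<Longrightarrow> 0 \<le> z * f z r"
    and zf_pos: "\<And>z r. z \<in> {-2..2} \<Longrightarrow> r \<in> {1..3} \<Longrightarrow> g z r = 0 \<Longrightarrow> 0 < z * f z r"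
    and smooth_\<mu>: "smooth_open UNIV \<mu>" and \<mu>_periodic: "\<And>\<theta>. \<mu> (\<theta> + 2 * pi) = \<mu> \<theta>"
    and \<mu>_bounds: "\<And>\<theta>. 0 \<le> \<mu> \<theta>" "\<And>\<theta>. \<mu> \<theta> \<le> 1"
    and kk: "-1 < kk" "kk < 1" and \<mu>_peak: "\<And>\<theta>. kk \<le> cos (\<theta> - c) \<Longrightarrow> \<mu> \<theta> = 1"
begin

abbreviation X :: "real \<Rightarrow> real \<times> real \<times> real \<Rightarrow> real \<times> real \<times> real" where
  "X \<equiv> deformation Gf Gg (blend_weight h \<mu>)"

lemma X_eq:
  "(z, \<theta>, r) \<in> Wlift \<Longrightarrow> X t (z, \<theta>, r) =
     ((1 - blend_weight h \<mu> t \<theta>) * g z r + blend_weight h \<mu> t \<theta>, (1 - blend_weight h \<mu> t \<theta>) * f z r, 0)"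
  by (simp add: deformation_apply Gf_eq Gg_eq Wlift_def)

lemma X_0: "(z, \<theta>, r) \<in> Wlift \<Longrightarrow> X 0 (z, \<theta>, r) = (g z r, f z r, 0)"
  by (simp add: X_eq blend_weight_0)

lemma X_2: "X 2 p = (1, 0, 0)"
  by (cases p) (simp add: deformation_apply blend_weight_2)

lemma X_where_switched_on: "t \<in> {1..2} \<Longrightarrow> \<mu> \<theta> = 1 \<Longrightarrow> X t (z, \<theta>, r) = (1, 0, 0)"
  by (simp add: deformation_apply blend_weight_eq_1)

lemma X_where_switched_off:
  "t \<in> {0..1} \<Longrightarrow> (z, \<theta>, r) \<in> Wlift \<Longrightarrow> \<mu> \<theta> = 0 \<Longrightarrow> X t (z, \<theta>, r) = (g z r, f z r, 0)"
  by (simp add: X_eq blend_weight_eq_0)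

lemma X_near_bdry:
  assumes "\<And>z r. z \<in> {-2..2} \<Longrightarrow> r \<in> {1..3} \<Longrightarrow> \<bar>z\<bar> \<ge> 2 - e' \<or> r \<le> 1 + e' \<or> r \<ge> 3 - e' \<Longrightarrow>
      f z r = 0 \<and> g z r = 1"
  shows "p \<in> Wlift \<Longrightarrow> near_bdry e' p \<Longrightarrow> X t p = (1, 0, 0)"
  using assms X_eq unfolding near_bdry_def Wlift_def by (cases p) auto

lemma smooth_on_set_X: "smooth_on_set ({0..2} \<times> Wlift) (\<lambda>(t, p). X t p)"
  unfolding smooth_on_set_def
proof (intro exI conjI)
  show "{0..2} \<times> Wlift \<subseteq> (\<lambda>q. (fst (snd q), snd (snd (snd q)))) -` U"
    using domain unfolding Wlift_def by auto
  show "smooth_open ((\<lambda>q. (fst (snd q), snd (snd (snd q)))) -` U) (\<lambda>q. X (fst q) (snd q))"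
    by (rule smooth_open_deformation[OF smooth_Gf smooth_Gg smooth_open_blend_weight[OF smooth_\<mu>]])
qed auto

lemma X_periodic: "X t (z, \<theta> + 2 * pi, r) = X t (z, \<theta>, r)"
  by (simp add: deformation_apply blend_weight_def \<mu>_periodic)

lemma X_nonzero:
  assumes "t \<in> {0..2}" "p \<in> Wlift"
  shows "X t p \<noteq> 0"
proof
  obtain z \<theta> r where p: "p = (z, \<theta>, r)" by (metis prod.collapse)
  have dom: "z \<in> {-2..2}" "r \<in> {1..3}" using assms(2) p unfolding Wlift_def by auto
  define s where "s = blend_weight h \<mu> t \<theta>"
  have s: "0 \<le> s" "s \<le> 1" unfolding s_def using assms(1) \<mu>_bounds by (auto intro: blend_weight_bounds)
  assume "X t p = 0"
  then have X0: "(1 - s) * g z r + s = 0" "(1 - s) * f z r = 0"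
    using X_eq assms(2) p unfolding s_def by (auto simp: zero_prod_def)
  moreover have "0 \<le> (1 - s) * g z r" using s g_nonneg[OF dom] by simp
  ultimately have "s = 0" using s by linarith
  then show False using X0 zf_pos[OF dom] by simp
qed

lemma X_no_trapped_orbit:
  assumes "t \<in> {0<..2}"
  shows "\<not> has_trapped_orbit (X t)"
proof (rule blend_no_trapped_orbit[where s = "blend_weight h \<mu> t" and kk = kk and c = c
      and cc = "switch_on h t" and g = g and f = f])
  show "\<And>z \<theta> r. (z, \<theta>, r) \<in> Wlift \<Longrightarrow> X t (z, \<theta>, r) =
      ((1 - blend_weight h \<mu> t \<theta>) * g z r + blend_weight h \<mu> t \<theta>, (1 - blend_weight h \<mu> t \<theta>) * f z r, 0)"
    by (rule X_eq)
  show "0 \<le> blend_weight h \<mu> t \<theta>" "blend_weight h \<mu> t \<theta> \<le> 1" for \<theta>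
    using assms \<mu>_bounds by (auto intro: blend_weight_bounds)
  show "kk \<le> cos (\<theta> - c) \<Longrightarrow> switch_on h t \<le> blend_weight h \<mu> t \<theta>" for \<theta>
    by (simp add: blend_weight_def \<mu>_peak)
  show "continuous_on ({-2..2} \<times> {1..3}) (\<lambda>p. g (fst p) (snd p))"
    using continuous_on_subset[OF smooth_open_imp_continuous_on[OF smooth_Gg] domain]
    by (rule continuous_on_cong[THEN iffD1, rotated 2]) (auto simp: Gg_eq)
  show "continuous_on ({-2..2} \<times> {1..3}) (\<lambda>p. f (fst p) (snd p))"
    using continuous_on_subset[OF smooth_open_imp_continuous_on[OF smooth_Gf] domain]
    by (rule continuous_on_cong[THEN iffD1, rotated 2]) (auto simp: Gf_eq)
qed (use assms kk switch_on_pos g_nonneg zf_nonneg zf_pos in auto)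

end

theorem lemma3p3:
  fixes f g :: "real \<Rightarrow> real \<Rightarrow> real"
    and I1 I2 J1 J2 :: "complex set"
    and D1 D2 E1 E2 :: "(real \<times> complex \<times> real) set"
  assumes f_smooth: "smooth_on_set ({-2..2} \<times> {1..3}) (\<lambda>(z, r). f z r)"
    and g_smooth: "smooth_on_set ({-2..2} \<times> {1..3}) (\<lambda>(z, r). g z r)"
    and f_odd: "\<And>z r. z \<in> {-2..2} \<Longrightarrow> r \<in> {1..3} \<Longrightarrow> f (- z) r = - f z r"
    and g_even: "\<And>z r. z \<in> {-2..2} \<Longrightarrow> r \<in> {1..3} \<Longrightarrow> g (- z) r = g z r"
    and fg_bdry: "\<exists>e>0. \<forall>z\<in>{-2..2}. \<forall>r\<in>{1..3}.
                    (\<bar>z\<bar> \<ge> 2 - e \<or> r \<le> 1 + e \<or> r \<ge> 3 - e) \<longrightarrow> f z r = 0 \<and> g z r = 1"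
    and g_nonneg: "\<And>z r. z \<in> {-2..2} \<Longrightarrow> r \<in> {1..3} \<Longrightarrow> g z r \<ge> 0"
    and g_zero: "\<And>z r. z \<in> {-2..2} \<Longrightarrow> r \<in> {1..3} \<Longrightarrow> g z r = 0 \<longleftrightarrow> (\<bar>z\<bar> = 1 \<and> r = 2)"
    and f_pos: "\<And>z r. z \<in> {0<..2} \<Longrightarrow> r \<in> {1..3} \<Longrightarrow> f z r \<ge> 0"
    and f_one: "\<And>z r. z \<in> {1/4..7/4} \<Longrightarrow> r \<in> {5/4..11/4} \<Longrightarrow> f z r = 1"
    and arcs: "open_arc I1" "open_arc I2" "open_arc J1" "open_arc J2"
    and disj: "I1 \<inter> I2 = {}" "I1 \<inter> J1 = {}" "I1 \<inter> J2 = {}"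
              "I2 \<inter> J1 = {}" "I2 \<inter> J2 = {}" "J1 \<inter> J2 = {}"
    and cpt: "compact D1" "compact D2" "compact E1" "compact E2"
    and D1_sub: "D1 \<subseteq> {-2..2} \<times> I1 \<times> {1..3}"
    and D2_sub: "D2 \<subseteq> {-2..2} \<times> I2 \<times> {1..3}"
    and E1_sub: "E1 \<subseteq> {-2..2} \<times> J1 \<times> {1..3}"
    and E2_sub: "E2 \<subseteq> {-2..2} \<times> J2 \<times> {1..3}"
  shows "\<exists>X :: real \<Rightarrow> real \<times> real \<times> real \<Rightarrow> real \<times> real \<times> real.
     smooth_on_set ({0..2} \<times> Wlift) (\<lambda>(t, p). X t p)
   \<and> (\<forall>t z \<theta> r. X t (z, \<theta> + 2 * pi, r) = X t (z, \<theta>, r))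
   \<and> (\<forall>t\<in>{0..2}. \<forall>p\<in>Wlift. X t p \<noteq> 0)
   \<and> (\<forall>t\<in>{0..2}. \<exists>e>0. \<forall>p\<in>Wlift. near_bdry e p \<longrightarrow> X t p = (1, 0, 0))
   \<and> (\<forall>z \<theta> r. (z, \<theta>, r) \<in> Wlift \<longrightarrow> X 0 (z, \<theta>, r) = (g z r, f z r, 0))
   \<and> (\<forall>p\<in>Wlift. X 2 p = (1, 0, 0))
   \<and> (\<forall>t\<in>{1..2}. \<forall>p\<in>Wlift. Phi p \<in> D1 \<union> D2 \<longrightarrow> X t p = (1, 0, 0))
   \<and> (\<forall>t\<in>{0..1}. \<forall>z \<theta> r. (z, \<theta>, r) \<in> Wlift \<longrightarrow> Phi (z, \<theta>, r) \<in> E1 \<union> E2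
          \<longrightarrow> X t (z, \<theta>, r) = (g z r, f z r, 0))
   \<and> (\<forall>t\<in>{0<..2}. \<not> has_closed_orbit (X t) \<and> \<not> has_trapped_orbit (X t))"
proof -
  obtain e0 where e0: "0 < e0" and bdry: "\<And>z r. z \<in> {-2..2} \<Longrightarrow> r \<in> {1..3} \<Longrightarrow>
      \<bar>z\<bar> \<ge> 2 - e0 \<or> r \<le> 1 + e0 \<or> r \<ge> 3 - e0 \<Longrightarrow> f z r = 0 \<and> g z r = 1"
    using fg_bdry by blast
  obtain U Gf Gg where U: "{-2..2} \<times> {1..3} \<subseteq> U" "smooth_open U Gf" "smooth_open U Gg"
    and G_eq: "\<And>z r. z \<in> {-2..2} \<Longrightarrow> r \<in> {1..3} \<Longrightarrow> Gf (z, r) = f z r \<and> Gg (z, r) = g z r"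
    using smooth_on_set_common_extension[OF f_smooth g_smooth] by (metis SigmaI case_prod_conv)
  txt \<open>Capping the collar width at \<open>1\<close> keeps the profile's flat part inside \<open>[1, 3]\<close>, where
    \<open>Gf\<close> agrees with \<open>f\<close>.\<close>
  have "Gf (1, r) = 0" if "1 \<le> r" "r \<le> 1 + min e0 1" for r
    using that bdry[of 1 r] G_eq[of 1 r] by (simp add: min_def split: if_splits)
  then interpret step_profile "\<lambda>r. Gf (1, r)" "(\<lambda>r. (1, r)) -` U" "min e0 1"
    using e0 U f_one G_eq by (intro step_profile_of_section) auto
  obtain \<mu> :: "real \<Rightarrow> real" and kk c where \<mu>: "smooth_open UNIV \<mu>" "\<And>\<theta>. \<mu> (\<theta> + 2 * pi) = \<mu> \<theta>"
      "\<And>\<theta>. 0 \<le> \<mu> \<theta>" "\<And>\<theta>. \<mu> \<theta> \<le> 1"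
      "\<And>z \<theta> r. (z, cis \<theta>, r) \<in> D1 \<union> D2 \<Longrightarrow> \<mu> \<theta> = 1" "\<And>z \<theta> r. (z, cis \<theta>, r) \<in> E1 \<union> E2 \<Longrightarrow> \<mu> \<theta> = 0"
      "-1 < kk" "kk < 1" "\<And>\<theta>. kk \<le> cos (\<theta> - c) \<Longrightarrow> \<mu> \<theta> = 1"
    by (fact switch_for_pieces[OF arcs(1,2) disj(1-5) cpt(1,2) D1_sub D2_sub E1_sub E2_sub])
  have zf_nonneg: "0 \<le> z * f z r" if "z \<in> {-2..2}" "r \<in> {1..3}" for z r
    using that f_odd f_pos by (intro mult_nonneg_if_odd) auto
  have zf_pos: "0 < z * f z r" if "z \<in> {-2..2}" "r \<in> {1..3}" "g z r = 0" for z r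
  proof -
    have "z = 1 \<or> z = -1" "r = 2" using g_zero[OF that(1,2)] that(3) by auto
    then show ?thesis using f_one[of 1 2] f_odd[of 1 2] by auto
  qed
  interpret deformation_data "\<lambda>r. Gf (1, r)" "(\<lambda>r. (1, r)) -` U" "min e0 1" f g Gf Gg U \<mu> kk c
    using U \<mu> G_eq g_nonneg zf_nonneg zf_pos by unfold_locales auto
  show ?thesis
  proof (intro exI[of _ X] conjI ballI allI impI)
    fix t p z \<theta> r
    show "smooth_on_set ({0..2} \<times> Wlift) (\<lambda>(t, p). X t p)" by (rule smooth_on_set_X)
    show "X t (z, \<theta> + 2 * pi, r) = X t (z, \<theta>, r)" by (rule X_periodic)
    show "t \<in> {0..2} \<Longrightarrow> p \<in> Wlift \<Longrightarrow> X t p \<noteq> 0" by (rule X_nonzero)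
    show "\<exists>e>0. \<forall>p\<in>Wlift. near_bdry e p \<longrightarrow> X t p = (1, 0, 0)"
      using e0 X_near_bdry[OF bdry] by blast
    show "(z, \<theta>, r) \<in> Wlift \<Longrightarrow> X 0 (z, \<theta>, r) = (g z r, f z r, 0)" by (rule X_0)
    show "X 2 p = (1, 0, 0)" by (rule X_2)
    show "t \<in> {1..2} \<Longrightarrow> Phi p \<in> D1 \<union> D2 \<Longrightarrow> X t p = (1, 0, 0)"
      using X_where_switched_on \<mu>(5) by (cases p) (auto simp: Phi_def)
    show "t \<in> {0..1} \<Longrightarrow> (z, \<theta>, r) \<in> Wlift \<Longrightarrow> Phi (z, \<theta>, r) \<in> E1 \<union> E2 \<Longrightarrow>
        X t (z, \<theta>, r) = (g z r, f z r, 0)"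
      using X_where_switched_off \<mu>(6) by (simp add: Phi_def)
    show "t \<in> {0<..2} \<Longrightarrow> \<not> has_closed_orbit (X t)" "t \<in> {0<..2} \<Longrightarrow> \<not> has_trapped_orbit (X t)"
      using X_no_trapped_orbit has_closed_orbit_imp_has_trapped_orbit by blast+
  qed
qed

end
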